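(* Let $k$ be a field, $\Gamma=(V,E)$ a finite connected quiver and $I\subseteq R^2$ a two-sided ideal of $k\Gamma$ such that $k\Gamma/I$ is finite dimensional. Then $$\dim_k HH^1(k\Gamma/I)=\dim_k\mathfrak{F}_2(I)+\dim_k Z(k\Gamma/I)-|\mathscr{Q}_C|.$$
   Context: For a path $p$, $t(p),h(p)$ are its start and end vertex; paths multiply by left-to-right concatenation (product $0$ if they do not concatenate). $R$ is the ideal generated by $E$, $\overline{x}=x+I$. $HH^1(k\Gamma/I)$ is the space of derivations of the algebra $k\Gamma/I$ modulo inner derivations; $Z(k\Gamma/I)$ is its center. A differential operator from $k\Gamma$ to $k\Gamma/I$ is a $k$-linear map with $D(xy)=D(x)\overline{y}+\overline{x}D(y)$. $\mathscr{Q}$ is a fixed $k$-basis of $k\Gamma/I$ consisting of residue classes of paths and containing the classes of all vertices and arrows; for $\overline{s}\in\mathscr{Q}$, $t(\overline{s}),h(\overline{s})$ are the start/end vertex of any representing path (well defined). $\mathscr{Q}_C=\{\overline{q}\in\mathscr{Q}\mid t(\overline{q})=h(\overline{q})\}$. For $r\in E$ and $\overline{s}\in\mathscr{Q}$ with $t(r)=t(\overline{s})$, $h(r)=h(\overline{s})$, $D_{r,\overline{s}}$ is the unique differential operator $k\Gamma\to k\Gamma/I$ with $D_{r,\overline{s}}(r)=\overline{s}$ and vanishing on all other arrows and vertices; $\mathfrak{D}_2$ is the $k$-span of all such $D_{r,\overline{s}}$, and $\mathfrak{F}_2(I)=\{D\in\mathfrak{D}_2\mid D(I)=0\}$. *)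

theory Defs
  imports Complex_Main "HOL-Library.Function_Algebras"
begin

text \<open>A path is encoded as a pair (v, es): its start vertex v and its list of arrows es
  (the empty list gives the trivial path at v).\<close>

type_synonym ('v,'e) qpath = "'v \<times> 'e list"

definition valid_path :: "'v set \<Rightarrow> 'e set \<Rightarrow> ('e \<Rightarrow> 'v) \<Rightarrow> ('e \<Rightarrow> 'v) \<Rightarrow> ('v,'e) qpath \<Rightarrow> bool" where
  "valid_path V E t h p = (fst p \<in> V \<and> set (snd p) \<subseteq> E \<and>
     (snd p \<noteq> [] \<longrightarrow> t (hd (snd p)) = fst p) \<and>
     (\<forall>i. Suc i < length (snd p) \<longrightarrow> h (snd p ! i) = t (snd p ! Suc i)))"

definition path_end :: "('e \<Rightarrow> 'v) \<Rightarrow> ('v,'e) qpath \<Rightarrow> 'v" where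
  "path_end h p = (if snd p = [] then fst p else h (last (snd p)))"

definition finite_quiver :: "'v set \<Rightarrow> 'e set \<Rightarrow> ('e \<Rightarrow> 'v) \<Rightarrow> ('e \<Rightarrow> 'v) \<Rightarrow> bool" where
  "finite_quiver V E t h = (finite V \<and> finite E \<and> (\<forall>a\<in>E. t a \<in> V \<and> h a \<in> V))"

definition connected_quiver :: "'v set \<Rightarrow> 'e set \<Rightarrow> ('e \<Rightarrow> 'v) \<Rightarrow> ('e \<Rightarrow> 'v) \<Rightarrow> bool" where
  "connected_quiver V E t h =
    (\<forall>u\<in>V. \<forall>w\<in>V. (u, w) \<in> ({(t a, h a) | a. a \<in> E} \<union> {(h a, t a) | a. a \<in> E})\<^sup>*)"

definition path_alg :: "'v set \<Rightarrow> 'e set \<Rightarrow> ('e \<Rightarrow> 'v) \<Rightarrow> ('e \<Rightarrow> 'v) \<Rightarrow> (('v,'e) qpath \<Rightarrow> 'k::field) set" where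
  "path_alg V E t h = {x. finite {p. x p \<noteq> 0} \<and> (\<forall>p. x p \<noteq> 0 \<longrightarrow> valid_path V E t h p)}"

text \<open>Multiplication: left-to-right concatenation of paths, extended bilinearly.\<close>
definition pmul :: "('e \<Rightarrow> 'v) \<Rightarrow> (('v,'e) qpath \<Rightarrow> 'k::field) \<Rightarrow> (('v,'e) qpath \<Rightarrow> 'k) \<Rightarrow> (('v,'e) qpath \<Rightarrow> 'k)" where
  "pmul h x y = (\<lambda>(v, es). \<Sum>i\<in>{0..length es}.
      x (v, take i es) * y (path_end h (v, take i es), drop i es))"

definition pscale :: "'k::field \<Rightarrow> (('v,'e) qpath \<Rightarrow> 'k) \<Rightarrow> (('v,'e) qpath \<Rightarrow> 'k)" where
  "pscale c x = (\<lambda>p. c * x p)"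

definition pbasis :: "('v,'e) qpath \<Rightarrow> (('v,'e) qpath \<Rightarrow> 'k::field)" where
  "pbasis p = (\<lambda>q. if q = p then 1 else 0)"

definition vertex_el :: "'v \<Rightarrow> (('v,'e) qpath \<Rightarrow> 'k::field)" where
  "vertex_el v = pbasis (v, [])"

definition arrow_el :: "('e \<Rightarrow> 'v) \<Rightarrow> 'e \<Rightarrow> (('v,'e) qpath \<Rightarrow> 'k::field)" where
  "arrow_el t a = pbasis (t a, [a])"

definition is_ideal :: "'v set \<Rightarrow> 'e set \<Rightarrow> ('e \<Rightarrow> 'v) \<Rightarrow> ('e \<Rightarrow> 'v) \<Rightarrow> (('v,'e) qpath \<Rightarrow> 'k::field) set \<Rightarrow> bool" where
  "is_ideal V E t h J = (J \<subseteq> path_alg V E t h \<and> 0 \<in> J \<and>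
     (\<forall>x\<in>J. \<forall>y\<in>J. x + y \<in> J) \<and> (\<forall>c. \<forall>x\<in>J. pscale c x \<in> J) \<and>
     (\<forall>a\<in>path_alg V E t h. \<forall>x\<in>J. pmul h a x \<in> J \<and> pmul h x a \<in> J))"

definition ideal_gen :: "'v set \<Rightarrow> 'e set \<Rightarrow> ('e \<Rightarrow> 'v) \<Rightarrow> ('e \<Rightarrow> 'v) \<Rightarrow> (('v,'e) qpath \<Rightarrow> 'k::field) set \<Rightarrow> (('v,'e) qpath \<Rightarrow> 'k) set" where
  "ideal_gen V E t h S = \<Inter>{J. is_ideal V E t h J \<and> S \<subseteq> J}"

definition arrow_ideal :: "'v set \<Rightarrow> 'e set \<Rightarrow> ('e \<Rightarrow> 'v) \<Rightarrow> ('e \<Rightarrow> 'v) \<Rightarrow> (('v,'e) qpath \<Rightarrow> 'k::field) set" where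
  "arrow_ideal V E t h = ideal_gen V E t h {arrow_el t a | a. a \<in> E}"

definition arrow_ideal_sq :: "'v set \<Rightarrow> 'e set \<Rightarrow> ('e \<Rightarrow> 'v) \<Rightarrow> ('e \<Rightarrow> 'v) \<Rightarrow> (('v,'e) qpath \<Rightarrow> 'k::field) set" where
  "arrow_ideal_sq V E t h = ideal_gen V E t h
     {pmul h x y | x y. x \<in> arrow_ideal V E t h \<and> y \<in> arrow_ideal V E t h}"

text \<open>The quotient k Gamma / I is represented (up to isomorphism) by a type 'a with a ring
  structure and k-scalar multiplication sc, together with a surjective k-algebra
  homomorphism pi from k Gamma onto 'a whose kernel is exactly I. pi x is the residue
  class of x.\<close>

definition quotient_map ::
  "'v set \<Rightarrow> 'e set \<Rightarrow> ('e \<Rightarrow> 'v) \<Rightarrow> ('e \<Rightarrow> 'v) \<Rightarrow> (('v,'e) qpath \<Rightarrow> 'k::field) set \<Rightarrow>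
   ('k \<Rightarrow> 'a::ring \<Rightarrow> 'a) \<Rightarrow> ((('v,'e) qpath \<Rightarrow> 'k) \<Rightarrow> 'a) \<Rightarrow> bool" where
  "quotient_map V E t h I sc \<pi> =
    (Vector_Spaces.vector_space sc \<and>
     (\<forall>x\<in>path_alg V E t h. \<forall>y\<in>path_alg V E t h.
        \<pi> (x + y) = \<pi> x + \<pi> y \<and> \<pi> (pmul h x y) = \<pi> x * \<pi> y) \<and>
     (\<forall>c. \<forall>x\<in>path_alg V E t h. \<pi> (pscale c x) = sc c (\<pi> x)) \<and>
     \<pi> ` path_alg V E t h = UNIV \<and>
     {x \<in> path_alg V E t h. \<pi> x = 0} = I)"

definition derivations :: "('k::field \<Rightarrow> 'a::ring \<Rightarrow> 'a) \<Rightarrow> ('a \<Rightarrow> 'a) set" where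
  "derivations sc = {D. Vector_Spaces.linear sc sc D \<and> (\<forall>x y. D (x * y) = D x * y + x * D y)}"

definition inner_derivations :: "('a::ring \<Rightarrow> 'a) set" where
  "inner_derivations = {(\<lambda>x. a * x - x * a) | a. True}"

definition fun_scale :: "('k \<Rightarrow> 'a \<Rightarrow> 'a) \<Rightarrow> 'k \<Rightarrow> ('b \<Rightarrow> 'a) \<Rightarrow> ('b \<Rightarrow> 'a)" where
  "fun_scale sc c f = (\<lambda>x. sc c (f x))"

text \<open>dim_k HH^1(A) = dim_k Der(A) - dim_k Inn(A) (dimension of the quotient space;
  both are finite-dimensional when A is). Stated as an integer.\<close>
definition dim_HH1 :: "('k::field \<Rightarrow> 'a::ring \<Rightarrow> 'a) \<Rightarrow> int" where
  "dim_HH1 sc = int (vector_space.dim (fun_scale sc) (derivations sc))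
               - int (vector_space.dim (fun_scale sc) (inner_derivations :: ('a \<Rightarrow> 'a) set))"

definition centre :: "'a::ring set" where
  "centre = {z. \<forall>x. z * x = x * z}"

definition cls_src :: "'v set \<Rightarrow> 'e set \<Rightarrow> ('e \<Rightarrow> 'v) \<Rightarrow> ('e \<Rightarrow> 'v) \<Rightarrow>
    ((('v,'e) qpath \<Rightarrow> 'k::field) \<Rightarrow> 'a) \<Rightarrow> 'a \<Rightarrow> 'v" where
  "cls_src V E t h \<pi> q = fst (SOME p. valid_path V E t h p \<and> \<pi> (pbasis p) = q)"

definition cls_tgt :: "'v set \<Rightarrow> 'e set \<Rightarrow> ('e \<Rightarrow> 'v) \<Rightarrow> ('e \<Rightarrow> 'v) \<Rightarrow>
    ((('v,'e) qpath \<Rightarrow> 'k::field) \<Rightarrow> 'a) \<Rightarrow> 'a \<Rightarrow> 'v" where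
  "cls_tgt V E t h \<pi> q = path_end h (SOME p. valid_path V E t h p \<and> \<pi> (pbasis p) = q)"

definition path_basis :: "'v set \<Rightarrow> 'e set \<Rightarrow> ('e \<Rightarrow> 'v) \<Rightarrow> ('e \<Rightarrow> 'v) \<Rightarrow>
    ('k::field \<Rightarrow> 'a::ring \<Rightarrow> 'a) \<Rightarrow> ((('v,'e) qpath \<Rightarrow> 'k) \<Rightarrow> 'a) \<Rightarrow> 'a set \<Rightarrow> bool" where
  "path_basis V E t h sc \<pi> Q =
    (\<not> module.dependent sc Q \<and> module.span sc Q = UNIV \<and>
     (\<forall>q\<in>Q. \<exists>p. valid_path V E t h p \<and> q = \<pi> (pbasis p)) \<and>
     (\<forall>v\<in>V. \<pi> (vertex_el v) \<in> Q) \<and> (\<forall>a\<in>E. \<pi> (arrow_el t a) \<in> Q))"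

definition Q_C :: "'v set \<Rightarrow> 'e set \<Rightarrow> ('e \<Rightarrow> 'v) \<Rightarrow> ('e \<Rightarrow> 'v) \<Rightarrow>
    ((('v,'e) qpath \<Rightarrow> 'k::field) \<Rightarrow> 'a) \<Rightarrow> 'a set \<Rightarrow> 'a set" where
  "Q_C V E t h \<pi> Q = {q \<in> Q. cls_src V E t h \<pi> q = cls_tgt V E t h \<pi> q}"

text \<open>Differential operators k Gamma \<rightarrow> k Gamma / I (as functions that vanish outside
  k Gamma, so that they are determined by their values on k Gamma).\<close>
definition diff_op :: "'v set \<Rightarrow> 'e set \<Rightarrow> ('e \<Rightarrow> 'v) \<Rightarrow> ('e \<Rightarrow> 'v) \<Rightarrow>
    ('k::field \<Rightarrow> 'a::ring \<Rightarrow> 'a) \<Rightarrow> ((('v,'e) qpath \<Rightarrow> 'k) \<Rightarrow> 'a) \<Rightarrow> ((('v,'e) qpath \<Rightarrow> 'k) \<Rightarrow> 'a) \<Rightarrow> bool" where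
  "diff_op V E t h sc \<pi> D =
    ((\<forall>x. x \<notin> path_alg V E t h \<longrightarrow> D x = 0) \<and>
     (\<forall>x\<in>path_alg V E t h. \<forall>y\<in>path_alg V E t h.
        D (x + y) = D x + D y \<and> D (pmul h x y) = D x * \<pi> y + \<pi> x * D y) \<and>
     (\<forall>c. \<forall>x\<in>path_alg V E t h. D (pscale c x) = sc c (D x)))"

definition D_op :: "'v set \<Rightarrow> 'e set \<Rightarrow> ('e \<Rightarrow> 'v) \<Rightarrow> ('e \<Rightarrow> 'v) \<Rightarrow>
    ('k::field \<Rightarrow> 'a::ring \<Rightarrow> 'a) \<Rightarrow> ((('v,'e) qpath \<Rightarrow> 'k) \<Rightarrow> 'a) \<Rightarrow> 'e \<Rightarrow> 'a \<Rightarrow> ((('v,'e) qpath \<Rightarrow> 'k) \<Rightarrow> 'a)" where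
  "D_op V E t h sc \<pi> r s = (THE D. diff_op V E t h sc \<pi> D \<and> D (arrow_el t r) = s \<and>
      (\<forall>a\<in>E. a \<noteq> r \<longrightarrow> D (arrow_el t a) = 0) \<and> (\<forall>v\<in>V. D (vertex_el v) = 0))"

definition frakD2 :: "'v set \<Rightarrow> 'e set \<Rightarrow> ('e \<Rightarrow> 'v) \<Rightarrow> ('e \<Rightarrow> 'v) \<Rightarrow>
    ('k::field \<Rightarrow> 'a::ring \<Rightarrow> 'a) \<Rightarrow> ((('v,'e) qpath \<Rightarrow> 'k) \<Rightarrow> 'a) \<Rightarrow> 'a set \<Rightarrow> ((('v,'e) qpath \<Rightarrow> 'k) \<Rightarrow> 'a) set" where
  "frakD2 V E t h sc \<pi> Q = module.span (fun_scale sc)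
     {D_op V E t h sc \<pi> r s | r s. r \<in> E \<and> s \<in> Q \<and>
        t r = cls_src V E t h \<pi> s \<and> h r = cls_tgt V E t h \<pi> s}"

definition frakF2 :: "'v set \<Rightarrow> 'e set \<Rightarrow> ('e \<Rightarrow> 'v) \<Rightarrow> ('e \<Rightarrow> 'v) \<Rightarrow>
    ('k::field \<Rightarrow> 'a::ring \<Rightarrow> 'a) \<Rightarrow> ((('v,'e) qpath \<Rightarrow> 'k) \<Rightarrow> 'a) \<Rightarrow> 'a set \<Rightarrow>
    (('v,'e) qpath \<Rightarrow> 'k) set \<Rightarrow> ((('v,'e) qpath \<Rightarrow> 'k) \<Rightarrow> 'a) set" where
  "frakF2 V E t h sc \<pi> Q I = {D \<in> frakD2 V E t h sc \<pi> Q. \<forall>x\<in>I. D x = 0}"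

end

theory Submission
  imports Defs
begin

text \<open>A derivation of \<open>A = k\<Gamma>/I\<close> killing the vertex idempotents \<open>e\<^sub>v\<close> is the same as a
  differential operator \<open>k\<Gamma> \<rightarrow> A\<close> killing the vertices and \<open>I\<close>. Such an operator is
  determined by its values on the arrows, and the value on an arrow \<open>r\<close> lies in
  \<open>e\<^sub>t\<^sub>(\<^sub>r\<^sub>) A e\<^sub>h\<^sub>(\<^sub>r\<^sub>)\<close>, spanned by the basis elements parallel to \<open>r\<close>; so it is a combination of
  the \<open>D\<^sub>r\<^sub>,\<^sub>s\<close>, and these derivations form a space isomorphic to \<open>\<FF>\<^sub>2(I)\<close>. Every
  derivation \<open>d\<close> becomes one that kills the \<open>e\<^sub>v\<close> after subtracting the inner derivation of
  \<open>\<Sum>\<^sub>v d(e\<^sub>v) e\<^sub>v\<close>. Finally, the inner derivations killing the \<open>e\<^sub>v\<close> are the images under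
  \<open>ad\<close> of the elements commuting with all \<open>e\<^sub>v\<close>, a space with basis \<open>\<Q>\<^sub>C\<close> on which \<open>ad\<close> has
  the centre as kernel. Rank-nullity applied three times gives the formula.\<close>

lemma span_inter_span_diff_eq_0:
  assumes "vector_space s" "\<not> module.dependent s B" "C \<subseteq> B"
    and "x \<in> module.span s C" "x \<in> module.span s (B - C)"
  shows "x = 0"
proof -
  interpret vector_space s by (rule assms(1))
  have "representation B x = representation C x"
    by (rule representation_extend) (use assms in auto)
  moreover have "representation B x = representation (B - C) x"
    by (rule representation_extend) (use assms in auto)
  ultimately have "representation B x = (\<lambda>b. 0)"
    using representation_ne_zero by (metis DiffD2)
  moreover have "x \<in> span B" using assms(4,3) span_mono by blast
  ultimately show "x = 0" using sum_nonzero_representation_eq[OF assms(2)] by force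
qed

lemma rank_nullity_on_subspace:
  assumes lin: "Vector_Spaces.linear s1 s2 f"
    and S: "module.subspace s1 S" and B: "finite B" "S \<subseteq> module.span s1 B"
  shows "vector_space.dim s1 S = vector_space.dim s2 (f ` S) + vector_space.dim s1 {x\<in>S. f x = 0}"
proof -
  interpret Vector_Spaces.linear s1 s2 f by (rule lin)
  let ?K = "{x\<in>S. f x = 0}"
  obtain BK where BK: "BK \<subseteq> ?K" "vs1.independent BK" "?K \<subseteq> vs1.span BK" "card BK = vs1.dim ?K"
    using vs1.basis_exists by blast
  obtain B' where B': "BK \<subseteq> B'" "B' \<subseteq> S" "vs1.independent B'" "S \<subseteq> vs1.span B'"
    using vs1.maximal_independent_subset_extend[of BK S] BK by blast
  have fin: "finite B'" using vs1.independent_span_bound[OF B(1) B'(3)] B'(2) B(2) by blast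
  let ?C = "B' - BK"
  have inj_span: "inj_on f (vs1.span ?C)"
    unfolding inj_on_iff_eq_0[OF vs1.subspace_span]
  proof (intro ballI impI)
    fix x assume x: "x \<in> vs1.span ?C" and fx: "f x = 0"
    have "x \<in> S" using x B'(2) S vs1.span_mono[of ?C S] vs1.span_eq_iff by blast
    then have "x \<in> vs1.span BK" using BK(3) fx by blast
    then show "x = 0" using span_inter_span_diff_eq_0[OF vs1.vector_space_axioms B'(3,1) _ x] by blast
  qed
  have "f ` S \<subseteq> vs2.span (f ` B')" using B'(4) by (rule spans_image)
  moreover have "f ` B' \<subseteq> insert 0 (f ` ?C)" using BK(1) by auto
  then have "vs2.span (f ` B') \<subseteq> vs2.span (f ` ?C)"
    by (metis vs2.span_insert_0 vs2.span_mono)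
  ultimately have "card (f ` ?C) = vs2.dim (f ` S)"
    using B'(2,3) inj_span vs1.independent_mono
    by (intro vs2.basis_card_eq_dim independent_injective_image) auto
  moreover have "inj_on f ?C" using inj_span vs1.span_superset inj_on_subset by blast
  moreover have "card B' = card BK + card ?C"
    using fin B'(1) by (metis card_Diff_subset card_mono finite_subset le_add_diff_inverse)
  ultimately show ?thesis
    using vs1.basis_card_eq_dim[OF B'(2) B'(4) B'(3)] BK(4) card_image by fastforce
qed

lemma vector_space_fun_scale: "vector_space s \<Longrightarrow> vector_space (fun_scale s)"
  unfolding vector_space_def fun_scale_def by (auto simp: fun_eq_iff)

lemma sum_fun_apply: "(sum f S) x = (\<Sum>i\<in>S. f i x)"
  by (induction S rule: infinite_finite_induct) auto

lemma occurrences_append: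
  "{i. i < length (xs @ ys) \<and> (xs @ ys) ! i = r}
     = {i. i < length xs \<and> xs ! i = r} \<union> (\<lambda>j. length xs + j) ` {j. j < length ys \<and> ys ! j = r}"
proof (rule set_eqI, rule iffI)
  fix i assume "i \<in> {i. i < length (xs @ ys) \<and> (xs @ ys) ! i = r}"
  then show "i \<in> {i. i < length xs \<and> xs ! i = r} \<union> (\<lambda>j. length xs + j) ` {j. j < length ys \<and> ys ! j = r}"
    by (cases "i < length xs") (auto simp: nth_append image_iff intro!: exI[of _ "i - length xs"])
qed (auto simp: nth_append)

lemma valid_path_Nil[simp]: "valid_path V E t h (v, []) \<longleftrightarrow> v \<in> V"
  by (simp add: valid_path_def)

lemma valid_path_Cons:
  assumes "\<forall>a\<in>E. h a \<in> V"
  shows "valid_path V E t h (v, a#es) \<longleftrightarrow> v \<in> V \<and> a \<in> E \<and> t a = v \<and> valid_path V E t h (h a, es)"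
proof -
  have "(\<forall>i. Suc i < length (a#es) \<longrightarrow> h ((a#es) ! i) = t ((a#es) ! Suc i)) \<longleftrightarrow>
        (es \<noteq> [] \<longrightarrow> h a = t (hd es)) \<and> (\<forall>i. Suc i < length es \<longrightarrow> h (es ! i) = t (es ! Suc i))"
    (is "?L \<longleftrightarrow> ?R")
  proof
    assume L: ?L
    show ?R
    proof
      show "es \<noteq> [] \<longrightarrow> h a = t (hd es)" using L[rule_format, of 0] by (cases es) auto
      show "\<forall>i. Suc i < length es \<longrightarrow> h (es ! i) = t (es ! Suc i)" using L[rule_format, of "Suc _"] by auto
    qed
  next
    assume R: ?R
    show ?L
    proof (intro allI impI)
      fix i assume "Suc i < length (a#es)"
      then show "h ((a#es) ! i) = t ((a#es) ! Suc i)" using R by (cases i) (auto simp: hd_conv_nth)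
    qed
  qed
  then show ?thesis using assms by (auto simp: valid_path_def)
qed

lemma path_end_Nil[simp]: "path_end h (v, []) = v" by (simp add: path_end_def)
lemma path_end_Cons[simp]: "path_end h (v, a#es) = path_end h (h a, es)"
  by (simp add: path_end_def)

lemma valid_path_fst: "valid_path V E t h p \<Longrightarrow> fst p \<in> V"
  by (simp add: valid_path_def)

lemma valid_path_end:
  assumes "\<forall>a\<in>E. h a \<in> V" "valid_path V E t h (v, es)"
  shows "path_end h (v, es) \<in> V"
  using assms(2)
proof (induction es arbitrary: v)
  case Nil then show ?case by simp
next
  case (Cons a es) then show ?case using valid_path_Cons[OF assms(1)] by auto
qed

lemma valid_path_append:
  assumes "\<forall>a\<in>E. h a \<in> V" "valid_path V E t h (v, es1)" "valid_path V E t h (w, es2)"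
    "path_end h (v, es1) = w"
  shows "valid_path V E t h (v, es1 @ es2) \<and> path_end h (v, es1 @ es2) = path_end h (w, es2)"
  using assms(2,4)
proof (induction es1 arbitrary: v)
  case Nil then show ?case using assms(3) by simp
next
  case (Cons a es) then show ?case using valid_path_Cons[OF assms(1)] by auto
qed

lemma valid_path_appendD:
  assumes "\<forall>a\<in>E. h a \<in> V" "valid_path V E t h (v, es1 @ es2)"
  shows "valid_path V E t h (v, es1) \<and> valid_path V E t h (path_end h (v, es1), es2)"
  using assms(2)
proof (induction es1 arbitrary: v)
  case Nil then show ?case by (simp add: valid_path_def)
next
  case (Cons a es) then show ?case using valid_path_Cons[OF assms(1)] by auto
qed

lemma path_end_take_Suc: "i < length es \<Longrightarrow> path_end h (v, take (Suc i) es) = h (es ! i)"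
  by (simp add: path_end_def take_Suc_conv_app_nth)

lemma valid_path_split_at:
  assumes hV: "\<forall>a\<in>E. h a \<in> V" and p: "valid_path V E t h (v, es)" and i: "i < length es"
  shows "valid_path V E t h (v, take i es)" "valid_path V E t h (h (es ! i), drop (Suc i) es)"
    "path_end h (h (es ! i), drop (Suc i) es) = path_end h (v, es)" "es ! i \<in> E"
proof -
  have "valid_path V E t h (v, take (Suc i) es @ drop (Suc i) es)" using p by simp
  from valid_path_appendD[OF hV this] have a: "valid_path V E t h (v, take (Suc i) es)"
    and b: "valid_path V E t h (h (es ! i), drop (Suc i) es)"
    using path_end_take_Suc[OF i, where h=h and v=v] by auto
  show "valid_path V E t h (h (es ! i), drop (Suc i) es)" by (rule b)
  have "path_end h (v, take (Suc i) es @ drop (Suc i) es) = path_end h (h (es ! i), drop (Suc i) es)"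
    using valid_path_append[OF hV a b] path_end_take_Suc[OF i, where h=h and v=v] by auto
  then show "path_end h (h (es ! i), drop (Suc i) es) = path_end h (v, es)" by simp
  have "valid_path V E t h (v, take i es @ drop i es)" using p by simp
  from valid_path_appendD[OF hV this] show "valid_path V E t h (v, take i es)" by simp
  show "es ! i \<in> E" using p i by (auto simp: valid_path_def)
qed

lemma sum_delta_cond:
  "finite A \<Longrightarrow> (\<Sum>i\<in>A. if i = n \<and> C then 1 else (0::'k::field)) = (if n \<in> A \<and> C then 1 else 0)"
  by (cases C) simp_all

lemma pmul_pbasis:
  "pmul h (pbasis p) (pbasis q) =
     (if path_end h p = fst q then pbasis (fst p, snd p @ snd q) else (0::('v,'e) qpath \<Rightarrow> 'k::field))"
    (is "?lhs = ?rhs")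
proof (rule ext)
  fix r :: "('v,'e) qpath"
  obtain v es where r: "r = (v, es)" by fastforce
  obtain pv pes where p: "p = (pv, pes)" by fastforce
  obtain qv qes where q: "q = (qv, qes)" by fastforce
  let ?n = "length pes"
  let ?match = "v = pv \<and> take ?n es = pes \<and> path_end h (v, pes) = qv \<and> drop ?n es = qes"
  have "?lhs r = (\<Sum>i\<in>{0..length es}. if i = ?n \<and> ?match then 1 else 0)"
    unfolding pmul_def r pbasis_def p q by (simp only: prod.case) (rule sum.cong; auto)
  also have "\<dots> = (if ?n \<in> {0..length es} \<and> ?match then 1 else 0)"
    by (rule sum_delta_cond) simp
  also have "\<dots> = ?rhs r"
    unfolding r p q pbasis_def by (auto simp: append_eq_conv_conj) (metis append_take_drop_id)
  finally show "?lhs r = ?rhs r" .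
qed

lemma pmul_add_left: "pmul h (x + y) z = pmul h x z + pmul h y z"
  by (auto simp: pmul_def fun_eq_iff distrib_right sum.distrib)
lemma pmul_add_right: "pmul h x (y + z) = pmul h x y + pmul h x z"
  by (auto simp: pmul_def fun_eq_iff distrib_left sum.distrib)
lemma pmul_zero_left[simp]: "pmul h 0 z = 0"
  by (auto simp: pmul_def fun_eq_iff)
lemma pmul_zero_right[simp]: "pmul h z 0 = 0"
  by (auto simp: pmul_def fun_eq_iff)
lemma pmul_scale_left: "pmul h (pscale c x) y = pscale c (pmul h x y)"
  by (auto simp: pmul_def pscale_def fun_eq_iff sum_distrib_left mult.assoc)
lemma pmul_scale_right: "pmul h x (pscale c y) = pscale c (pmul h x y)"
  by (auto simp: pmul_def pscale_def fun_eq_iff sum_distrib_left mult.left_commute)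
lemma pmul_sum_left: "pmul h (sum f S) y = (\<Sum>i\<in>S. pmul h (f i) y)"
proof (induction S rule: infinite_finite_induct)
  case (insert x F) then show ?case by (simp only: sum.insert[OF insert(1,2)] pmul_add_left insert(3))
next
  case (infinite A) then show ?case by (metis sum.infinite pmul_zero_left)
qed (simp only: sum.empty pmul_zero_left)
lemma pmul_sum_right: "pmul h y (sum f S) = (\<Sum>i\<in>S. pmul h y (f i))"
proof (induction S rule: infinite_finite_induct)
  case (insert x F) then show ?case by (simp only: sum.insert[OF insert(1,2)] pmul_add_right insert(3))
next
  case (infinite A) then show ?case by (metis sum.infinite pmul_zero_right)
qed (simp only: sum.empty pmul_zero_right)

lemma path_alg_zero[simp]: "0 \<in> path_alg V E t h"
  by (simp add: path_alg_def)

lemma path_alg_add: "x \<in> path_alg V E t h \<Longrightarrow> y \<in> path_alg V E t h \<Longrightarrow> x + y \<in> path_alg V E t h"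
proof -
  assume x: "x \<in> path_alg V E t h" and y: "y \<in> path_alg V E t h"
  have "{p. (x + y) p \<noteq> 0} \<subseteq> {p. x p \<noteq> 0} \<union> {p. y p \<noteq> 0}" by auto
  then show ?thesis using x y unfolding path_alg_def by (auto intro: finite_subset)
qed

lemma path_alg_scale: "x \<in> path_alg V E t h \<Longrightarrow> pscale c x \<in> path_alg V E t h"
proof -
  assume x: "x \<in> path_alg V E t h"
  have "{p. pscale c x p \<noteq> 0} \<subseteq> {p. x p \<noteq> 0}" by (auto simp: pscale_def)
  then show ?thesis using x unfolding path_alg_def by (auto intro: finite_subset simp: pscale_def)
qed

lemma pscale_minus: "pscale (-1) x = - x"
  by (auto simp: pscale_def fun_eq_iff)

lemma path_alg_uminus: "x \<in> path_alg V E t h \<Longrightarrow> - x \<in> path_alg V E t h"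
  using path_alg_scale[of x V E t h "-1"] by (simp add: pscale_minus)

lemma path_alg_diff: "x \<in> path_alg V E t h \<Longrightarrow> y \<in> path_alg V E t h \<Longrightarrow> x - y \<in> path_alg V E t h"
  using path_alg_add[of x V E t h "-y"] path_alg_uminus[of y] by simp

lemma path_alg_sum: "(\<And>i. i \<in> S \<Longrightarrow> f i \<in> path_alg V E t h) \<Longrightarrow> sum f S \<in> path_alg V E t h"
  by (induction S rule: infinite_finite_induct) (auto intro: path_alg_add)

lemma path_alg_basis: "valid_path V E t h p \<Longrightarrow> pbasis p \<in> path_alg V E t h"
  by (auto simp: path_alg_def pbasis_def)

lemma path_alg_finite: "x \<in> path_alg V E t h \<Longrightarrow> finite {p. x p \<noteq> 0}"
  by (simp add: path_alg_def)

lemma path_alg_valid: "x \<in> path_alg V E t h \<Longrightarrow> x p \<noteq> 0 \<Longrightarrow> valid_path V E t h p"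
  unfolding path_alg_def by blast

lemma path_alg_expand:
  assumes "x \<in> path_alg V E t h"
  shows "x = (\<Sum>p\<in>{p. x p \<noteq> 0}. pscale (x p) (pbasis p))"
proof (rule ext)
  fix q
  have fin: "finite {p. x p \<noteq> 0}" using assms by (simp add: path_alg_def)
  have "(\<Sum>p\<in>{p. x p \<noteq> 0}. pscale (x p) (pbasis p)) q = (\<Sum>p\<in>{p. x p \<noteq> 0}. if p = q then x p else 0)"
    unfolding sum_fun_apply by (rule sum.cong) (auto simp: pscale_def pbasis_def)
  also have "\<dots> = x q" using fin by (simp add: sum.delta)
  finally show "x q = (\<Sum>p\<in>{p. x p \<noteq> 0}. pscale (x p) (pbasis p)) q" by simp
qed

lemma pmul_expand:
  assumes "x \<in> path_alg V E t h" "y \<in> path_alg V E t h"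
  shows "pmul h x y = (\<Sum>p\<in>{p. x p \<noteq> 0}. \<Sum>q\<in>{q. y q \<noteq> 0}.
            pscale (x p * y q) (pmul h (pbasis p) (pbasis q)))"
proof -
  have "pmul h x y = pmul h (\<Sum>p\<in>{p. x p \<noteq> 0}. pscale (x p) (pbasis p)) (\<Sum>q\<in>{q. y q \<noteq> 0}. pscale (y q) (pbasis q))"
    using path_alg_expand[OF assms(1)] path_alg_expand[OF assms(2)] by simp
  also have "\<dots> = (\<Sum>p\<in>{p. x p \<noteq> 0}. \<Sum>q\<in>{q. y q \<noteq> 0}. pscale (x p * y q) (pmul h (pbasis p) (pbasis q)))"
    unfolding pmul_sum_left
    by (rule sum.cong[OF refl], unfold pmul_sum_right, rule sum.cong[OF refl])
       (simp only: pmul_scale_left pmul_scale_right, simp add: pscale_def mult.assoc fun_eq_iff)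
  finally show ?thesis .
qed

lemma path_alg_pmul_basis:
  assumes "\<forall>a\<in>E. h a \<in> V" "valid_path V E t h p" "valid_path V E t h q"
  shows "pmul h (pbasis p) (pbasis q) \<in> path_alg V E t h"
proof (cases "path_end h p = fst q")
  case True
  obtain v es where p: "p = (v, es)" by fastforce
  obtain w fs where q: "q = (w, fs)" by fastforce
  have v1: "valid_path V E t h (v, es)" and v2: "valid_path V E t h (w, fs)" and e: "path_end h (v, es) = w"
    using assms True p q by auto
  have "valid_path V E t h (v, es @ fs)" using valid_path_append[OF assms(1) v1 v2 e] by auto
  then show ?thesis using True p q by (simp add: pmul_pbasis path_alg_basis)
qed (simp add: pmul_pbasis)

lemma path_alg_pmul:
  assumes "\<forall>a\<in>E. h a \<in> V" "x \<in> path_alg V E t h" "y \<in> path_alg V E t h"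
  shows "pmul h x y \<in> path_alg V E t h"
  unfolding pmul_expand[OF assms(2,3)]
  by (intro path_alg_sum path_alg_scale path_alg_pmul_basis assms(1)) (auto intro: path_alg_valid[OF assms(2)] path_alg_valid[OF assms(3)])

section \<open>The quotient algebra and its vertex idempotents\<close>

locale quiver_quotient =
  fixes V :: "'v set" and E :: "'e set" and t h :: "'e \<Rightarrow> 'v"
    and I :: "(('v,'e) qpath \<Rightarrow> 'k::field) set"
    and sc :: "'k \<Rightarrow> 'a::ring \<Rightarrow> 'a" and \<pi> :: "(('v,'e) qpath \<Rightarrow> 'k) \<Rightarrow> 'a"
    and Q :: "'a set"
  assumes finite_quiver: "finite_quiver V E t h"
    and quotient_map: "quotient_map V E t h I sc \<pi>"
    and finite_dim: "\<exists>B. finite B \<and> module.span sc B = UNIV"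
    and path_basis: "path_basis V E t h sc \<pi> Q"
begin

abbreviation kG :: "(('v,'e) qpath \<Rightarrow> 'k) set" where "kG \<equiv> path_alg V E t h"
abbreviation "valid \<equiv> valid_path V E t h"

definition "cls p = \<pi> (pbasis p)"
definition "idem v = \<pi> (vertex_el v)"

lemma vector_space: "vector_space sc"
  using quotient_map by (simp add: quotient_map_def)

sublocale vs: vector_space sc by (rule vector_space)

lemma head_in_V: "\<forall>a\<in>E. h a \<in> V" and tail_in_V: "\<forall>a\<in>E. t a \<in> V"
  and finite_V: "finite V" and finite_E: "finite E"
  using finite_quiver by (auto simp: finite_quiver_def)

lemma pi_add: "x \<in> kG \<Longrightarrow> y \<in> kG \<Longrightarrow> \<pi> (x + y) = \<pi> x + \<pi> y"
  and pi_mult: "x \<in> kG \<Longrightarrow> y \<in> kG \<Longrightarrow> \<pi> (pmul h x y) = \<pi> x * \<pi> y"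
  and pi_scale: "x \<in> kG \<Longrightarrow> \<pi> (pscale c x) = sc c (\<pi> x)"
  and pi_kernel: "{x \<in> kG. \<pi> x = 0} = I"
  using quotient_map by (simp_all add: quotient_map_def)

lemma pi_surj: "\<exists>x\<in>kG. \<pi> x = y"
proof -
  have "\<pi> ` kG = UNIV" using quotient_map by (simp add: quotient_map_def)
  then show ?thesis by (metis UNIV_I imageE)
qed

lemma pi_zero [simp]: "\<pi> 0 = 0"
  using pi_add[of 0 0] by simp

lemma pi_sum: "(\<And>i. i \<in> S \<Longrightarrow> f i \<in> kG) \<Longrightarrow> \<pi> (sum f S) = (\<Sum>i\<in>S. \<pi> (f i))"
  by (induction S rule: infinite_finite_induct) (simp_all add: pi_add path_alg_sum)

lemma pi_expand:
  assumes x: "x \<in> kG"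
  shows "\<pi> x = (\<Sum>p | x p \<noteq> 0. sc (x p) (cls p))"
proof -
  have "\<pi> x = (\<Sum>p | x p \<noteq> 0. \<pi> (pscale (x p) (pbasis p)))"
    by (subst path_alg_expand[OF x], rule pi_sum)
       (use path_alg_valid[OF x] in \<open>auto intro: path_alg_scale path_alg_basis\<close>)
  also have "\<dots> = (\<Sum>p | x p \<noteq> 0. sc (x p) (cls p))"
    using path_alg_valid[OF x] by (intro sum.cong refl) (simp add: pi_scale path_alg_basis cls_def)
  finally show ?thesis .
qed

lemma scale_mult_left: "sc c (x * y) = sc c x * y"
proof -
  obtain X Y where X: "X \<in> kG" "\<pi> X = x" and Y: "Y \<in> kG" "\<pi> Y = y" using pi_surj by metis
  have "sc c (x * y) = \<pi> (pscale c (pmul h X Y))"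
    using X Y by (simp add: pi_scale pi_mult path_alg_pmul head_in_V)
  also have "\<dots> = \<pi> (pmul h (pscale c X) Y)" by (simp add: pmul_scale_left)
  also have "\<dots> = sc c x * y" using X Y by (simp add: pi_scale pi_mult path_alg_scale)
  finally show ?thesis .
qed

lemma scale_mult_right: "sc c (x * y) = x * sc c y"
proof -
  obtain X Y where X: "X \<in> kG" "\<pi> X = x" and Y: "Y \<in> kG" "\<pi> Y = y" using pi_surj by metis
  have "sc c (x * y) = \<pi> (pscale c (pmul h X Y))"
    using X Y by (simp add: pi_scale pi_mult path_alg_pmul head_in_V)
  also have "\<dots> = \<pi> (pmul h X (pscale c Y))" by (simp add: pmul_scale_right)
  also have "\<dots> = x * sc c y" using X Y by (simp add: pi_scale pi_mult path_alg_scale)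
  finally show ?thesis .
qed

lemma cls_mult: "valid p \<Longrightarrow> valid q \<Longrightarrow>
   cls p * cls q = (if path_end h p = fst q then cls (fst p, snd p @ snd q) else 0)"
  unfolding cls_def by (simp add: pi_mult[symmetric] path_alg_basis pmul_pbasis)

lemma idem_eq_cls: "idem v = cls (v, [])"
  by (simp add: idem_def cls_def vertex_el_def)

lemma idem_mult_cls: "valid p \<Longrightarrow> v \<in> V \<Longrightarrow> idem v * cls p = (if v = fst p then cls p else 0)"
  unfolding idem_eq_cls by (subst cls_mult) auto

lemma cls_mult_idem: "valid p \<Longrightarrow> v \<in> V \<Longrightarrow> cls p * idem v = (if path_end h p = v then cls p else 0)"
  unfolding idem_eq_cls by (subst cls_mult) auto

lemma idem_mult_idem: "v \<in> V \<Longrightarrow> w \<in> V \<Longrightarrow> idem v * idem w = (if v = w then idem v else 0)"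
  using idem_mult_cls[of "(w, [])" v] by (simp add: idem_eq_cls)

text \<open>The algebra need not have a unit of type class \<open>ring_1\<close>; the sum of the vertex
  idempotents serves as one.\<close>

definition "vertex_sum = (\<Sum>v\<in>V. idem v)"

lemma cls_mult_vertex_sum: "valid p \<Longrightarrow> cls p * vertex_sum = cls p"
proof -
  assume p: "valid p"
  have "path_end h p \<in> V" using valid_path_end[OF head_in_V] p by (metis prod.collapse)
  moreover have "cls p * vertex_sum = (\<Sum>w\<in>V. if path_end h p = w then cls p else 0)"
    unfolding vertex_sum_def sum_distrib_left using cls_mult_idem[OF p] by (intro sum.cong) auto
  ultimately show ?thesis using finite_V by simp
qed

lemma vertex_sum_mult_cls: "valid p \<Longrightarrow> vertex_sum * cls p = cls p"
proof -
  assume p: "valid p"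
  have "vertex_sum * cls p = (\<Sum>w\<in>V. if w = fst p then cls p else 0)"
    unfolding vertex_sum_def sum_distrib_right using idem_mult_cls[OF p] by (intro sum.cong) auto
  then show ?thesis using finite_V valid_path_fst[OF p] by simp
qed

lemma exists_path_expansion:
  "\<exists>X\<in>kG. x = (\<Sum>p | X p \<noteq> 0. sc (X p) (cls p)) \<and> (\<forall>p. X p \<noteq> 0 \<longrightarrow> valid p)"
proof -
  obtain X where "X \<in> kG" "\<pi> X = x" using pi_surj by blast
  then show ?thesis using pi_expand[of X] path_alg_valid[of X] by blast
qed

lemma mult_vertex_sum [simp]: "x * vertex_sum = x"
proof -
  obtain X where X: "x = (\<Sum>p | X p \<noteq> 0. sc (X p) (cls p))" "\<forall>p. X p \<noteq> 0 \<longrightarrow> valid p"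
    using exists_path_expansion by blast
  show ?thesis unfolding X(1) sum_distrib_right
    by (rule sum.cong) (auto simp: scale_mult_left[symmetric] cls_mult_vertex_sum X(2))
qed

lemma vertex_sum_mult [simp]: "vertex_sum * x = x"
proof -
  obtain X where X: "x = (\<Sum>p | X p \<noteq> 0. sc (X p) (cls p))" "\<forall>p. X p \<noteq> 0 \<longrightarrow> valid p"
    using exists_path_expansion by blast
  show ?thesis unfolding X(1) sum_distrib_left
    by (rule sum.cong) (auto simp: scale_mult_right[symmetric] vertex_sum_mult_cls X(2))
qed

lemma Q_independent: "vs.independent Q" and Q_span: "vs.span Q = UNIV"
  and Q_cls: "\<And>q. q \<in> Q \<Longrightarrow> \<exists>p. valid p \<and> q = cls p"
  using path_basis by (auto simp: path_basis_def cls_def)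

lemma finite_Q: "finite Q"
  using finite_dim vs.independent_span_bound[OF _ Q_independent] by blast

lemma Q_nonzero: "q \<in> Q \<Longrightarrow> q \<noteq> 0"
  using Q_independent vs.dependent_zero by blast

text \<open>The endpoints of \<open>p\<close> are the only \<open>v\<close>, \<open>w\<close> with \<open>e\<^sub>v cls p \<noteq> 0\<close>, \<open>cls p e\<^sub>w \<noteq> 0\<close>.\<close>

lemma cls_endpoints:
  assumes p: "valid p" and p': "valid p'" and eq: "cls p = cls p'" and nz: "cls p \<noteq> 0"
  shows "fst p = fst p' \<and> path_end h p = path_end h p'"
proof
  show "fst p = fst p'"
    using idem_mult_cls[OF p valid_path_fst[OF p]] idem_mult_cls[OF p' valid_path_fst[OF p]] eq nz
    by (auto split: if_splits)
next
  have end_V: "path_end h p \<in> V" using valid_path_end[OF head_in_V] p by (metis prod.collapse)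
  have "cls p' * idem (path_end h p) = cls p'"
    using cls_mult_idem[OF p end_V] cls_mult_idem[OF p' end_V] eq by simp
  then show "path_end h p = path_end h p'"
    using cls_mult_idem[OF p' end_V] nz eq by (auto split: if_splits)
qed

definition "src q = cls_src V E t h \<pi> q"
definition "tgt q = cls_tgt V E t h \<pi> q"

lemma src_tgt_cls:
  assumes "valid p" "cls p = q" "q \<noteq> 0"
  shows "src q = fst p" "tgt q = path_end h p"
proof -
  let ?p = "SOME p. valid p \<and> \<pi> (pbasis p) = q"
  have "valid ?p \<and> \<pi> (pbasis ?p) = q" by (rule someI[of _ p]) (use assms in \<open>auto simp: cls_def\<close>)
  then have "fst ?p = fst p \<and> path_end h ?p = path_end h p"
    using cls_endpoints[of ?p p] assms by (auto simp: cls_def)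
  then show "src q = fst p" "tgt q = path_end h p"
    by (auto simp: src_def tgt_def cls_src_def cls_tgt_def)
qed

lemma Q_cls_endpoints: "q \<in> Q \<Longrightarrow> \<exists>p. valid p \<and> q = cls p \<and> src q = fst p \<and> tgt q = path_end h p"
  using Q_cls Q_nonzero src_tgt_cls by metis

lemma idem_mult_Q: "q \<in> Q \<Longrightarrow> v \<in> V \<Longrightarrow> idem v * q = (if v = src q then q else 0)"
  using Q_cls_endpoints idem_mult_cls by metis

lemma Q_mult_idem: "q \<in> Q \<Longrightarrow> v \<in> V \<Longrightarrow> q * idem v = (if tgt q = v then q else 0)"
  using Q_cls_endpoints cls_mult_idem by metis

end

section \<open>Differential operators on the path algebra\<close>

context quiver_quotient
begin

definition "lin_ext g x = (if x \<in> kG then (\<Sum>p | x p \<noteq> 0. sc (x p) (g p)) else 0)"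

lemma lin_ext_superset:
  assumes "x \<in> kG" "finite S" "{p. x p \<noteq> 0} \<subseteq> S"
  shows "lin_ext g x = (\<Sum>p\<in>S. sc (x p) (g p))"
  unfolding lin_ext_def using assms by (auto intro: sum.mono_neutral_left)

lemma lin_ext_add:
  assumes x: "x \<in> kG" and y: "y \<in> kG"
  shows "lin_ext g (x + y) = lin_ext g x + lin_ext g y"
proof -
  let ?S = "{p. x p \<noteq> 0} \<union> {p. y p \<noteq> 0}"
  have fin: "finite ?S" using path_alg_finite[OF x] path_alg_finite[OF y] by simp
  have "lin_ext g (x + y) = (\<Sum>p\<in>?S. sc ((x + y) p) (g p))"
    by (rule lin_ext_superset[OF path_alg_add[OF x y] fin]) auto
  also have "\<dots> = (\<Sum>p\<in>?S. sc (x p) (g p)) + (\<Sum>p\<in>?S. sc (y p) (g p))"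
    by (simp add: vs.scale_left_distrib sum.distrib)
  also have "\<dots> = lin_ext g x + lin_ext g y"
    using lin_ext_superset[OF x fin, of g] lin_ext_superset[OF y fin, of g] by auto
  finally show ?thesis .
qed

lemma lin_ext_scale:
  assumes x: "x \<in> kG"
  shows "lin_ext g (pscale c x) = sc c (lin_ext g x)"
proof -
  have "lin_ext g (pscale c x) = (\<Sum>p | x p \<noteq> 0. sc (pscale c x p) (g p))"
    by (rule lin_ext_superset) (use path_alg_scale[OF x] path_alg_finite[OF x] in \<open>auto simp: pscale_def\<close>)
  also have "\<dots> = sc c (lin_ext g x)"
    using x by (simp add: lin_ext_def pscale_def vs.scale_sum_right)
  finally show ?thesis .
qed

lemma lin_ext_zero [simp]: "lin_ext g 0 = 0"
  by (simp add: lin_ext_def)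

lemma lin_ext_sum: "(\<And>i. i \<in> S \<Longrightarrow> f i \<in> kG) \<Longrightarrow> lin_ext g (sum f S) = (\<Sum>i\<in>S. lin_ext g (f i))"
  by (induction S rule: infinite_finite_induct) (simp_all add: lin_ext_add path_alg_sum)

lemma lin_ext_pbasis: "valid p \<Longrightarrow> lin_ext g (pbasis p) = g p"
proof -
  assume p: "valid p"
  have "lin_ext g (pbasis p) = (\<Sum>q\<in>{p}. sc (pbasis p q) (g q))"
    by (rule lin_ext_superset[OF path_alg_basis[OF p]]) (auto simp: pbasis_def)
  then show ?thesis by (simp add: pbasis_def)
qed

lemma scale_mult_scale: "sc a u * sc c w = sc (a * c) (u * w)"
  by (simp add: scale_mult_left[symmetric] scale_mult_right[symmetric] mult.commute)

lemma lin_ext_pmul: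
  assumes base: "\<And>p q. valid p \<Longrightarrow> valid q \<Longrightarrow>
      lin_ext g (pmul h (pbasis p) (pbasis q)) = g p * cls q + cls p * g q"
    and x: "x \<in> kG" and y: "y \<in> kG"
  shows "lin_ext g (pmul h x y) = lin_ext g x * \<pi> y + \<pi> x * lin_ext g y"
proof -
  let ?X = "{p. x p \<noteq> 0}" and ?Y = "{q. y q \<noteq> 0}"
  have mem: "\<And>p q. p \<in> ?X \<Longrightarrow> q \<in> ?Y \<Longrightarrow> pscale (x p * y q) (pmul h (pbasis p) (pbasis q)) \<in> kG"
    using path_alg_valid[OF x] path_alg_valid[OF y]
    by (auto intro!: path_alg_scale path_alg_pmul_basis head_in_V)
  have "lin_ext g (pmul h x y)
      = (\<Sum>p\<in>?X. \<Sum>q\<in>?Y. lin_ext g (pscale (x p * y q) (pmul h (pbasis p) (pbasis q))))"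
    unfolding pmul_expand[OF x y]
    by (subst lin_ext_sum, (rule path_alg_sum, use mem in blast),
        rule sum.cong[OF refl], rule lin_ext_sum, use mem in blast)
  also have "\<dots> = (\<Sum>p\<in>?X. \<Sum>q\<in>?Y. sc (x p * y q) (g p * cls q + cls p * g q))"
    using path_alg_valid[OF x] path_alg_valid[OF y]
    by (intro sum.cong refl) (simp add: lin_ext_scale path_alg_pmul_basis head_in_V base)
  also have "\<dots> = (\<Sum>p\<in>?X. sc (x p) (g p)) * (\<Sum>q\<in>?Y. sc (y q) (cls q))
                 + (\<Sum>p\<in>?X. sc (x p) (cls p)) * (\<Sum>q\<in>?Y. sc (y q) (g q))"
    by (simp add: sum_product scale_mult_scale sum.distrib vs.scale_right_distrib)
  also have "\<dots> = lin_ext g x * \<pi> y + \<pi> x * lin_ext g y"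
    using x y by (simp add: lin_ext_def pi_expand)
  finally show ?thesis .
qed

abbreviation "diffop D \<equiv> diff_op V E t h sc \<pi> D"

lemma diffop_add: "diffop D \<Longrightarrow> x \<in> kG \<Longrightarrow> y \<in> kG \<Longrightarrow> D (x + y) = D x + D y"
  and diffop_pmul: "diffop D \<Longrightarrow> x \<in> kG \<Longrightarrow> y \<in> kG \<Longrightarrow> D (pmul h x y) = D x * \<pi> y + \<pi> x * D y"
  and diffop_scale: "diffop D \<Longrightarrow> x \<in> kG \<Longrightarrow> D (pscale c x) = sc c (D x)"
  and diffop_outside: "diffop D \<Longrightarrow> x \<notin> kG \<Longrightarrow> D x = 0"
  unfolding diff_op_def by blast+

lemma diffop_lin_ext:
  assumes "\<And>p q. valid p \<Longrightarrow> valid q \<Longrightarrow>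
      lin_ext g (pmul h (pbasis p) (pbasis q)) = g p * cls q + cls p * g q"
  shows "diffop (lin_ext g)"
  unfolding diff_op_def
  using lin_ext_add lin_ext_scale lin_ext_pmul[OF assms] by (auto simp: lin_ext_def)

lemma diffop_zero: "diffop D \<Longrightarrow> D 0 = 0"
  unfolding diff_op_def by (metis add_cancel_right_right path_alg_zero add_0)

lemma diffop_sum_distrib: "diffop D \<Longrightarrow> (\<And>i. i \<in> S \<Longrightarrow> f i \<in> kG) \<Longrightarrow> D (sum f S) = (\<Sum>i\<in>S. D (f i))"
  by (induction S rule: infinite_finite_induct)
     (simp_all add: diffop_zero diffop_add path_alg_sum)

lemma diffop_eq_lin_ext:
  assumes D: "diffop D"
  shows "D = lin_ext (\<lambda>p. D (pbasis p))"
proof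
  fix x
  show "D x = lin_ext (\<lambda>p. D (pbasis p)) x"
  proof (cases "x \<in> kG")
    case False then show ?thesis using D by (simp add: diff_op_def lin_ext_def)
  next
    case True
    have "D x = D (\<Sum>p | x p \<noteq> 0. pscale (x p) (pbasis p))" using path_alg_expand[OF True] by simp
    also have "\<dots> = (\<Sum>p | x p \<noteq> 0. D (pscale (x p) (pbasis p)))"
      by (rule diffop_sum_distrib[OF D]) (use path_alg_valid[OF True] in \<open>auto intro: path_alg_scale path_alg_basis\<close>)
    also have "\<dots> = (\<Sum>p | x p \<noteq> 0. sc (x p) (D (pbasis p)))"
      using D path_alg_valid[OF True] by (intro sum.cong refl) (auto simp: diff_op_def path_alg_basis)
    also have "\<dots> = lin_ext (\<lambda>p. D (pbasis p)) x" using True by (simp add: lin_ext_def)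
    finally show ?thesis .
  qed
qed

lemma pbasis_Cons:
  assumes "valid (v, a # es)"
  shows "pbasis (v, a # es) = pmul h (arrow_el t a) (pbasis (h a, es))"
  using assms valid_path_Cons[OF head_in_V] by (simp add: arrow_el_def pmul_pbasis)

lemma diffop_Cons:
  assumes D: "diffop D" and p: "valid (v, a # es)"
  shows "D (pbasis (v, a # es))
           = D (arrow_el t a) * cls (h a, es) + \<pi> (arrow_el t a) * D (pbasis (h a, es))"
proof -
  have "valid (t a, [a])" "valid (h a, es)" using p valid_path_Cons[OF head_in_V] head_in_V by auto
  then show ?thesis
    unfolding pbasis_Cons[OF p] using diffop_pmul[OF D path_alg_basis path_alg_basis]
    by (simp add: arrow_el_def cls_def)
qed

lemma diffop_eqI:
  assumes D: "diffop D" and D': "diffop D'"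
    and vertices: "\<And>v. v \<in> V \<Longrightarrow> D (vertex_el v) = D' (vertex_el v)"
    and arrows: "\<And>a. a \<in> E \<Longrightarrow> D (arrow_el t a) = D' (arrow_el t a)"
  shows "D = D'"
proof -
  have "D (pbasis (v, es)) = D' (pbasis (v, es))" if "valid (v, es)" for v es
    using that
  proof (induction es arbitrary: v)
    case Nil then show ?case using vertices by (simp add: vertex_el_def)
  next
    case (Cons a es)
    have "valid (h a, es)" "a \<in> E" using Cons.prems valid_path_Cons[OF head_in_V] by auto
    then show ?case
      using diffop_Cons[OF D Cons.prems] diffop_Cons[OF D' Cons.prems] Cons.IH arrows by simp
  qed
  then have "lin_ext (\<lambda>p. D (pbasis p)) = lin_ext (\<lambda>p. D' (pbasis p))"
    unfolding lin_ext_def by (intro ext) (auto intro!: sum.cong dest: path_alg_valid)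
  then show ?thesis using diffop_eq_lin_ext[OF D] diffop_eq_lin_ext[OF D'] by simp
qed

text \<open>The explicit form of \<open>D\<^sub>r\<^sub>,\<^sub>s\<close>: on a path it replaces, one at a time, each occurrence of
  the arrow \<open>r\<close> by \<open>s\<close>.\<close>

definition "replace_arrow r s p = (\<Sum>i | i < length (snd p) \<and> snd p ! i = r.
   cls (fst p, take i (snd p)) * s * cls (h r, drop (Suc i) (snd p)))"

lemma replace_arrow_append:
  assumes p: "valid (v, es1)" and q: "valid (w, es2)" and pq: "path_end h (v, es1) = w"
  shows "replace_arrow r s (v, es1 @ es2)
           = replace_arrow r s (v, es1) * cls (w, es2) + cls (v, es1) * replace_arrow r s (w, es2)"
proof -
  let ?n = "length es1" and ?A = "{i. i < length es1 \<and> es1 ! i = r}"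
    and ?B = "{j. j < length es2 \<and> es2 ! j = r}"
    and ?term = "\<lambda>i. cls (v, take i (es1 @ es2)) * s * cls (h r, drop (Suc i) (es1 @ es2))"
  have left: "?term i = cls (v, take i es1) * s * cls (h r, drop (Suc i) es1) * cls (w, es2)"
    if "i \<in> ?A" for i
  proof -
    from that have i: "i < ?n" and r: "es1 ! i = r" by auto
    have "valid (h r, drop (Suc i) es1)" "path_end h (h r, drop (Suc i) es1) = w"
      using valid_path_split_at[OF head_in_V p i] r pq by auto
    then have "cls (h r, drop (Suc i) es1 @ es2) = cls (h r, drop (Suc i) es1) * cls (w, es2)"
      using cls_mult[OF _ q] by simp
    then show ?thesis using i by (simp add: mult.assoc)
  qed
  have right: "?term (?n + j) = cls (v, es1) * (cls (w, take j es2) * s * cls (h r, drop (Suc j) es2))"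
    if "j \<in> ?B" for j
  proof -
    from that have j: "j < length es2" by auto
    have "cls (v, es1 @ take j es2) = cls (v, es1) * cls (w, take j es2)"
      using cls_mult[OF p valid_path_split_at(1)[OF head_in_V q j]] pq by simp
    then show ?thesis by (simp add: mult.assoc)
  qed
  have "replace_arrow r s (v, es1 @ es2) = sum ?term ?A + sum ?term ((\<lambda>j. ?n + j) ` ?B)"
    unfolding replace_arrow_def snd_conv fst_conv occurrences_append
    by (rule sum.union_disjoint) auto
  also have "sum ?term ((\<lambda>j. ?n + j) ` ?B) = sum (\<lambda>j. ?term (?n + j)) ?B"
    by (rule sum.reindex_cong[where l="\<lambda>j. ?n + j"]) (auto simp: inj_on_def)
  finally show ?thesis
    using left right by (simp add: replace_arrow_def sum_distrib_left sum_distrib_right)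
qed

lemma replace_arrow_not_composable:
  assumes p: "valid (v, es1)" and q: "valid (w, es2)" and pq: "path_end h (v, es1) \<noteq> w"
  shows "replace_arrow r s (v, es1) * cls (w, es2) = 0" "cls (v, es1) * replace_arrow r s (w, es2) = 0"
proof -
  have "cls (v, take i es1) * s * cls (h r, drop (Suc i) es1) * cls (w, es2) = 0"
    if "i < length es1" "es1 ! i = r" for i
  proof -
    have "valid (h r, drop (Suc i) es1)" "path_end h (h r, drop (Suc i) es1) = path_end h (v, es1)"
      using valid_path_split_at[OF head_in_V p that(1)] that(2) by auto
    then have "cls (h r, drop (Suc i) es1) * cls (w, es2) = 0" using cls_mult[OF _ q] pq by simp
    then show ?thesis by (simp add: mult.assoc)
  qed
  then show "replace_arrow r s (v, es1) * cls (w, es2) = 0"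
    by (simp add: replace_arrow_def sum_distrib_right)
  have "cls (v, es1) * (cls (w, take j es2) * s * cls (h r, drop (Suc j) es2)) = 0"
    if "j < length es2" for j
  proof -
    have "cls (v, es1) * cls (w, take j es2) = 0"
      using cls_mult[OF p valid_path_split_at(1)[OF head_in_V q that]] pq by simp
    then show ?thesis by (simp add: mult.assoc[symmetric])
  qed
  then show "cls (v, es1) * replace_arrow r s (w, es2) = 0"
    by (simp add: replace_arrow_def sum_distrib_left)
qed

lemma diffop_replace_arrow: "diffop (lin_ext (replace_arrow r s))"
proof (rule diffop_lin_ext)
  fix p q assume p: "valid p" and q: "valid q"
  obtain v es1 w es2 where pq: "p = (v, es1)" "q = (w, es2)" by fastforce
  show "lin_ext (replace_arrow r s) (pmul h (pbasis p) (pbasis q))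
          = replace_arrow r s p * cls q + cls p * replace_arrow r s q"
  proof (cases "path_end h p = fst q")
    case True
    then have "valid (v, es1 @ es2)" using valid_path_append[OF head_in_V] p q pq by auto
    then show ?thesis
      using True pq p q by (simp add: pmul_pbasis lin_ext_pbasis replace_arrow_append)
  next
    case False
    then show ?thesis
      using replace_arrow_not_composable[of v es1 w es2 r s] p q pq by (simp add: pmul_pbasis)
  qed
qed

lemma replace_arrow_vertex: "v \<in> V \<Longrightarrow> lin_ext (replace_arrow r s) (vertex_el v) = 0"
  by (simp add: vertex_el_def lin_ext_pbasis replace_arrow_def)

lemma valid_arrow: "a \<in> E \<Longrightarrow> valid (t a, [a])"
  using head_in_V tail_in_V valid_path_Cons[OF head_in_V] by auto

lemma replace_arrow_arrow:
  assumes a: "a \<in> E" and r: "r \<in> E" and s: "s \<in> Q" and "t r = src s" and "h r = tgt s"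
  shows "lin_ext (replace_arrow r s) (arrow_el t a) = (if a = r then s else 0)"
proof -
  have occ: "{i. i < length [a] \<and> [a] ! i = r} = (if a = r then {0} else {})" by auto
  have "idem (t r) * s = s" "s * idem (h r) = s"
    using idem_mult_Q[OF s, of "t r"] Q_mult_idem[OF s, of "h r"] assms head_in_V tail_in_V by auto
  then have "idem (t r) * s * idem (h r) = s" by simp
  then have "replace_arrow r s (t a, [a]) = (if a = r then s else 0)"
    unfolding replace_arrow_def snd_conv fst_conv occ by (auto simp: idem_eq_cls)
  then show ?thesis by (simp add: arrow_el_def lin_ext_pbasis[OF valid_arrow[OF a]])
qed

text \<open>\<open>D_op r s\<close> is defined as \<open>THE D. arrow_op r s D\<close>.\<close>

definition "arrow_op a y D \<longleftrightarrow> diffop D \<and> D (arrow_el t a) = y \<and>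
   (\<forall>a'\<in>E. a' \<noteq> a \<longrightarrow> D (arrow_el t a') = 0) \<and> (\<forall>v\<in>V. D (vertex_el v) = 0)"

lemma arrow_op_unique: "a \<in> E \<Longrightarrow> arrow_op a y D \<Longrightarrow> arrow_op a y D' \<Longrightarrow> D = D'"
  unfolding arrow_op_def by (rule diffop_eqI) (auto, metis)

lemma arrow_op_replace_arrow:
  "r \<in> E \<Longrightarrow> s \<in> Q \<Longrightarrow> t r = src s \<Longrightarrow> h r = tgt s \<Longrightarrow> arrow_op r s (lin_ext (replace_arrow r s))"
  unfolding arrow_op_def using diffop_replace_arrow replace_arrow_vertex replace_arrow_arrow by auto

lemma arrow_op_D_op:
  assumes "r \<in> E" "s \<in> Q" "t r = src s" "h r = tgt s"
  shows "arrow_op r s (D_op V E t h sc \<pi> r s)"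
proof -
  have "D_op V E t h sc \<pi> r s = (THE D. arrow_op r s D)"
    by (simp add: D_op_def arrow_op_def)
  also have "\<dots> = lin_ext (replace_arrow r s)"
    using arrow_op_replace_arrow[OF assms] arrow_op_unique[OF assms(1)] by blast
  finally show ?thesis using arrow_op_replace_arrow[OF assms] by simp
qed

end

section \<open>Derivations vanishing on the vertices and \<open>\<FF>\<^sub>2(I)\<close>\<close>

context quiver_quotient
begin

abbreviation scE :: "'k \<Rightarrow> ('a \<Rightarrow> 'a) \<Rightarrow> ('a \<Rightarrow> 'a)" where "scE \<equiv> fun_scale sc"
abbreviation scD :: "'k \<Rightarrow> ((('v,'e) qpath \<Rightarrow> 'k) \<Rightarrow> 'a) \<Rightarrow> ((('v,'e) qpath \<Rightarrow> 'k) \<Rightarrow> 'a)"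
  where "scD \<equiv> fun_scale sc"

sublocale End: vector_space scE by (rule vector_space_fun_scale[OF vector_space])
sublocale Op: vector_space scD by (rule vector_space_fun_scale[OF vector_space])

abbreviation "D2 \<equiv> frakD2 V E t h sc \<pi> Q"
abbreviation "F2 \<equiv> frakF2 V E t h sc \<pi> Q I"

lemma D2_eq: "D2 = Op.span {D_op V E t h sc \<pi> r s | r s. r \<in> E \<and> s \<in> Q \<and> t r = src s \<and> h r = tgt s}"
  by (simp add: frakD2_def src_def tgt_def)

lemma diffop_zero_op: "diffop (0 :: (('v,'e) qpath \<Rightarrow> 'k) \<Rightarrow> 'a)"
  unfolding diff_op_def by simp

lemma diffop_plus: "diffop D \<Longrightarrow> diffop D' \<Longrightarrow> diffop (D + D')"
  unfolding diff_op_def by (simp add: algebra_simps vs.scale_right_distrib)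

lemma diffop_fun_scale: "diffop D \<Longrightarrow> diffop (\<lambda>x. sc c (D x))"
  unfolding diff_op_def
  by (simp add: vs.scale_right_distrib scale_mult_left[symmetric] scale_mult_right[symmetric])

lemma diffop_sum: "(\<And>i. i \<in> S \<Longrightarrow> diffop (G i)) \<Longrightarrow> diffop (sum G S)"
  by (induction S rule: infinite_finite_induct) (simp_all add: diffop_zero_op diffop_plus)

lemma D2_diffop: "D \<in> D2 \<Longrightarrow> diffop D \<and> (\<forall>v\<in>V. D (vertex_el v) = 0)"
  unfolding D2_eq
proof (induction rule: Op.span_induct)
  case (step D)
  then show ?case using arrow_op_D_op by (auto simp: arrow_op_def)
next
  case base
  show ?case
    by (rule Op.subspaceI) (auto simp: diffop_zero_op diffop_plus diffop_fun_scale fun_scale_def)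
qed

definition "parallel_basis a = {s \<in> Q. t a = src s \<and> h a = tgt s}"

lemma arrow_op_in_D2:
  assumes a: "a \<in> E" and y: "y \<in> vs.span (parallel_basis a)"
  shows "\<exists>D\<in>D2. arrow_op a y D"
  using y
proof (induction rule: vs.span_induct)
  case (step s)
  then have "D_op V E t h sc \<pi> a s \<in> D2"
    unfolding D2_eq parallel_basis_def using a by (intro Op.span_base) blast
  then show ?case using arrow_op_D_op[of a s] step a by (auto simp: parallel_basis_def)
next
  case base
  have "0 \<in> D2" "arrow_op a 0 0" unfolding D2_eq arrow_op_def by (simp_all add: Op.span_zero diffop_zero_op)
  moreover have "arrow_op a (y + y') (D + D')" if "arrow_op a y D" "arrow_op a y' D'" for y y' D D'
    using that diffop_plus unfolding arrow_op_def by simp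
  moreover have "arrow_op a (sc c y) (scD c D)" if "arrow_op a y D" for c y D
    using that diffop_fun_scale unfolding arrow_op_def by (simp add: fun_scale_def)
  ultimately show ?case
    unfolding D2_eq by (intro vs.subspaceI) (blast intro: Op.span_add Op.span_scale)+
qed

abbreviation "Der \<equiv> derivations sc"

definition "Der0 = {d \<in> Der. \<forall>v\<in>V. d (idem v) = 0}"

definition "der_lift d = (\<lambda>x. if x \<in> kG then d (\<pi> x) else 0)"

lemma derivation_add: "d \<in> Der \<Longrightarrow> d (x + y) = d x + d y"
  and derivation_scale: "d \<in> Der \<Longrightarrow> d (sc c x) = sc c (d x)"
  and derivation_mult: "d \<in> Der \<Longrightarrow> d (x * y) = d x * y + x * d y"
  unfolding derivations_def by (auto simp: Vector_Spaces.linear_iff)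

lemma derivation_zero: "d \<in> Der \<Longrightarrow> d 0 = 0"
  using derivation_add[of d 0 0] by simp

lemma linear_sandwich: "Vector_Spaces.linear sc sc (\<lambda>y. c1 * y * c2)"
  by (simp add: Vector_Spaces.linear_iff vector_space distrib_left distrib_right
      scale_mult_left[symmetric] scale_mult_right[symmetric])

lemma idem_Q_idem:
  "q \<in> Q \<Longrightarrow> v \<in> V \<Longrightarrow> w \<in> V \<Longrightarrow> idem v * q * idem w = (if src q = v \<and> tgt q = w then q else 0)"
  by (simp add: idem_mult_Q Q_mult_idem)

lemma idem_sandwich_span:
  assumes "v \<in> V" "w \<in> V"
  shows "idem v * y * idem w \<in> vs.span {q\<in>Q. src q = v \<and> tgt q = w}"
proof -
  have hom: "module_hom sc sc (\<lambda>y. idem v * y * idem w)"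
    using linear_sandwich module_hom_iff_linear by blast
  have "idem v * y * idem w \<in> vs.span ((\<lambda>y. idem v * y * idem w) ` Q)"
    unfolding module_hom.span_image[OF hom] Q_span by (rule rangeI)
  moreover have "(\<lambda>y. idem v * y * idem w) ` Q \<subseteq> insert 0 {q\<in>Q. src q = v \<and> tgt q = w}"
    using assms by (auto simp: idem_Q_idem)
  then have "vs.span ((\<lambda>y. idem v * y * idem w) ` Q) \<subseteq> vs.span (insert 0 {q\<in>Q. src q = v \<and> tgt q = w})"
    by (rule vs.span_mono)
  ultimately show ?thesis by (simp add: subset_iff)
qed

lemma Der0_arrow_in_span:
  assumes d: "d \<in> Der0" and a: "a \<in> E"
  shows "d (\<pi> (arrow_el t a)) \<in> vs.span (parallel_basis a)"
proof -
  let ?x = "\<pi> (arrow_el t a)"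
  have der: "d \<in> Der" and vert: "\<And>v. v \<in> V \<Longrightarrow> d (idem v) = 0" using d by (auto simp: Der0_def)
  have ta: "t a \<in> V" and ha: "h a \<in> V" using tail_in_V head_in_V a by auto
  have "?x = idem (t a) * ?x * idem (h a)"
    using valid_arrow[OF a] idem_mult_cls cls_mult_idem ta ha by (auto simp: arrow_el_def cls_def)
  then have "d ?x = d (idem (t a) * ?x * idem (h a))" by simp
  also have "\<dots> = idem (t a) * d ?x * idem (h a)"
    using derivation_mult[OF der] vert[OF ta] vert[OF ha] by (simp add: mult.assoc)
  finally have "d ?x = idem (t a) * d ?x * idem (h a)" .
  moreover have "idem (t a) * d ?x * idem (h a) \<in> vs.span (parallel_basis a)"
    using idem_sandwich_span[OF ta ha] by (simp add: parallel_basis_def eq_commute conj_commute)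
  ultimately show ?thesis by simp
qed

lemma diffop_der_lift: "d \<in> Der \<Longrightarrow> diffop (der_lift d)"
  unfolding diff_op_def der_lift_def
  by (auto simp: path_alg_add path_alg_pmul path_alg_scale head_in_V pi_add pi_mult pi_scale
      derivation_add derivation_mult derivation_scale)

lemma arrow_el_in_kG: "a \<in> E \<Longrightarrow> arrow_el t a \<in> kG"
  and vertex_el_in_kG: "v \<in> V \<Longrightarrow> vertex_el v \<in> kG"
  by (simp_all add: arrow_el_def vertex_el_def path_alg_basis valid_arrow)

lemma sum_arrow_ops:
  assumes G: "\<And>a. a \<in> E \<Longrightarrow> arrow_op a (y a) (G a)"
  shows "diffop (sum G E)" "\<And>v. v \<in> V \<Longrightarrow> sum G E (vertex_el v) = 0"
    "\<And>a. a \<in> E \<Longrightarrow> sum G E (arrow_el t a) = y a"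
proof -
  show "diffop (sum G E)" by (rule diffop_sum) (use G in \<open>auto simp: arrow_op_def\<close>)
  show "sum G E (vertex_el v) = 0" if "v \<in> V" for v
    unfolding sum_fun_apply using G that by (auto simp: arrow_op_def intro!: sum.neutral)
  show "sum G E (arrow_el t a) = y a" if a: "a \<in> E" for a
  proof -
    have "sum G E (arrow_el t a) = G a (arrow_el t a) + (\<Sum>a'\<in>E - {a}. G a' (arrow_el t a))"
      unfolding sum_fun_apply by (rule sum.remove[OF finite_E a])
    also have "(\<Sum>a'\<in>E - {a}. G a' (arrow_el t a)) = 0"
    proof (rule sum.neutral, rule ballI)
      fix a' assume "a' \<in> E - {a}"
      then show "G a' (arrow_el t a) = 0" using G[of a'] a by (auto simp: arrow_op_def)
    qed
    finally show ?thesis using G[OF a] by (simp add: arrow_op_def)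
  qed
qed

lemma der_lift_in_D2:
  assumes d: "d \<in> Der0"
  shows "der_lift d \<in> D2"
proof -
  have der: "d \<in> Der" and vert: "\<And>v. v \<in> V \<Longrightarrow> d (idem v) = 0" using d by (auto simp: Der0_def)
  have "\<forall>a\<in>E. \<exists>D\<in>D2. arrow_op a (d (\<pi> (arrow_el t a))) D"
    using arrow_op_in_D2 Der0_arrow_in_span[OF d] by blast
  then obtain G where G: "\<And>a. a \<in> E \<Longrightarrow> G a \<in> D2 \<and> arrow_op a (d (\<pi> (arrow_el t a))) (G a)"
    by metis
  then have ops: "\<And>a. a \<in> E \<Longrightarrow> arrow_op a (d (\<pi> (arrow_el t a))) (G a)" by blast
  have "der_lift d = sum G E"
  proof (rule diffop_eqI[OF diffop_der_lift[OF der] sum_arrow_ops(1)[OF ops]])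
    show "der_lift d (vertex_el v) = sum G E (vertex_el v)" if "v \<in> V" for v
      using sum_arrow_ops(2)[OF ops that] vert[OF that] vertex_el_in_kG[OF that]
      by (simp add: der_lift_def idem_def)
    show "der_lift d (arrow_el t a) = sum G E (arrow_el t a)" if "a \<in> E" for a
      using sum_arrow_ops(3)[OF ops that] arrow_el_in_kG[OF that] by (simp add: der_lift_def)
  qed
  moreover have "sum G E \<in> D2" unfolding D2_eq by (rule Op.span_sum) (use G D2_eq in auto)
  ultimately show ?thesis by simp
qed

lemma der_lift_in_F2: "d \<in> Der0 \<Longrightarrow> der_lift d \<in> F2"
  unfolding frakF2_def using der_lift_in_D2 pi_kernel derivation_zero
  by (auto simp: der_lift_def Der0_def)

lemma diffop_factors_through_pi:
  assumes F: "diffop F" and FI: "\<And>x. x \<in> I \<Longrightarrow> F x = 0"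
  shows "\<exists>d\<in>Der. \<forall>x\<in>kG. d (\<pi> x) = F x"
proof -
  have well_defined: "F x = F x'" if "x \<in> kG" "x' \<in> kG" "\<pi> x = \<pi> x'" for x x'
  proof -
    have diff: "x - x' \<in> kG" by (rule path_alg_diff[OF that(1,2)])
    have x: "x = x' + (x - x')" by simp
    have "\<pi> x = \<pi> x' + \<pi> (x - x')" using pi_add[OF that(2) diff] x by metis
    then have "x - x' \<in> I" using pi_kernel diff that(3) by auto
    moreover have "F x = F x' + F (x - x')" using diffop_add[OF F that(2) diff] x by metis
    ultimately show ?thesis using FI by simp
  qed
  define rep where "rep y = (SOME x. x \<in> kG \<and> \<pi> x = y)" for y
  have rep: "rep y \<in> kG" "\<pi> (rep y) = y" for y
    using someI_ex[of "\<lambda>x. x \<in> kG \<and> \<pi> x = y"] pi_surj unfolding rep_def by blast+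
  define d where "d y = F (rep y)" for y
  have d_pi: "d (\<pi> x) = F x" if "x \<in> kG" for x
    unfolding d_def using well_defined rep that by blast
  have "d \<in> Der"
    unfolding derivations_def Vector_Spaces.linear_iff
  proof (intro CollectI conjI allI vector_space)
    fix y1 y2
    have "d (y1 + y2) = d (\<pi> (rep y1 + rep y2))" by (simp add: pi_add rep)
    also have "\<dots> = d y1 + d y2" by (simp add: d_pi path_alg_add diffop_add[OF F] rep) (simp add: d_def)
    finally show "d (y1 + y2) = d y1 + d y2" .
    have "d (y1 * y2) = d (\<pi> (pmul h (rep y1) (rep y2)))" by (simp add: pi_mult rep)
    also have "\<dots> = d y1 * y2 + y1 * d y2"
      by (simp add: d_pi path_alg_pmul[OF head_in_V] diffop_pmul[OF F] rep) (simp add: d_def)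
    finally show "d (y1 * y2) = d y1 * y2 + y1 * d y2" .
  next
    fix c y
    have "d (sc c y) = d (\<pi> (pscale c (rep y)))" by (simp add: pi_scale rep)
    also have "\<dots> = sc c (d y)" by (simp add: d_pi path_alg_scale diffop_scale[OF F] rep) (simp add: d_def)
    finally show "d (sc c y) = sc c (d y)" .
  qed
  then show ?thesis using d_pi by blast
qed

lemma der_lift_image: "der_lift ` Der0 = F2"
proof
  show "der_lift ` Der0 \<subseteq> F2" using der_lift_in_F2 by blast
  show "F2 \<subseteq> der_lift ` Der0"
  proof
    fix F assume "F \<in> F2"
    then have F: "diffop F" "\<And>v. v \<in> V \<Longrightarrow> F (vertex_el v) = 0" "\<And>x. x \<in> I \<Longrightarrow> F x = 0"
      using D2_diffop by (auto simp: frakF2_def)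
    then obtain d where d: "d \<in> Der" "\<And>x. x \<in> kG \<Longrightarrow> d (\<pi> x) = F x"
      using diffop_factors_through_pi by metis
    have "d (idem v) = 0" if "v \<in> V" for v
      using d(2)[OF vertex_el_in_kG[OF that]] F(2)[OF that] by (simp add: idem_def)
    then have "d \<in> Der0" using d(1) by (simp add: Der0_def)
    moreover have "der_lift d = F"
      using d diffop_outside[OF F(1)] by (auto simp: der_lift_def)
    ultimately show "F \<in> der_lift ` Der0" by blast
  qed
qed

lemma linear_der_lift: "Vector_Spaces.linear scE scD der_lift"
  unfolding Vector_Spaces.linear_iff using End.vector_space_axioms Op.vector_space_axioms
  by (auto simp: der_lift_def fun_scale_def fun_eq_iff)

lemma der_lift_eq_0: "der_lift d = 0 \<Longrightarrow> d = 0"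
proof
  fix y assume lift: "der_lift d = 0"
  obtain x where x: "x \<in> kG" "\<pi> x = y" using pi_surj by blast
  have "der_lift d x = 0" using lift by simp
  then show "d y = 0 y" using x by (simp add: der_lift_def)
qed

end

section \<open>Inner derivations and the vertex commutant\<close>

context quiver_quotient
begin

definition ad :: "'a \<Rightarrow> 'a \<Rightarrow> 'a" where "ad a = (\<lambda>x. a * x - x * a)"

lemma inner_derivations_eq: "inner_derivations = range ad"
  by (auto simp: inner_derivations_def ad_def)

lemma ad_in_Der: "ad a \<in> Der"
  unfolding derivations_def Vector_Spaces.linear_iff
  by (auto simp: ad_def vector_space algebra_simps vs.scale_right_diff_distrib
      scale_mult_left[symmetric] scale_mult_right[symmetric])

lemma ad_add: "ad (a1 + a2) = ad a1 + ad a2"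
  by (auto simp: ad_def fun_eq_iff algebra_simps)

lemma ad_scale: "ad (sc c a) = scE c (ad a)"
  by (auto simp: ad_def fun_eq_iff fun_scale_def vs.scale_right_diff_distrib
      scale_mult_left[symmetric] scale_mult_right[symmetric])

lemma ad_diff: "ad (a1 - a2) = ad a1 - ad a2"
  by (auto simp: ad_def fun_eq_iff algebra_simps)

lemma ad_zero: "ad 0 = 0"
  by (auto simp: ad_def fun_eq_iff)

lemma linear_ad: "Vector_Spaces.linear sc scE ad"
  unfolding Vector_Spaces.linear_iff using vector_space End.vector_space_axioms
  by (simp add: ad_add ad_scale)

lemma Der_subspace: "End.subspace Der"
proof (rule End.subspaceI)
  show "0 \<in> Der" unfolding derivations_def Vector_Spaces.linear_iff by (simp add: vector_space)
next
  fix d d' assume "d \<in> Der" "d' \<in> Der"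
  then show "d + d' \<in> Der" unfolding derivations_def Vector_Spaces.linear_iff
    by (simp add: algebra_simps vs.scale_right_distrib)
next
  fix c d assume "d \<in> Der"
  then show "scE c d \<in> Der" unfolding derivations_def Vector_Spaces.linear_iff
    by (simp add: fun_scale_def vs.scale_right_distrib scale_mult_left[symmetric]
        scale_mult_right[symmetric] mult.commute)
qed

lemma Der0_subspace: "End.subspace Der0"
proof (rule End.subspaceI)
  show "0 \<in> Der0" using End.subspace_0[OF Der_subspace] by (simp add: Der0_def)
next
  fix d d' assume "d \<in> Der0" "d' \<in> Der0"
  then show "d + d' \<in> Der0" using End.subspace_add[OF Der_subspace] by (simp add: Der0_def)
next
  fix c d assume "d \<in> Der0"
  then show "scE c d \<in> Der0" using End.subspace_scale[OF Der_subspace] by (simp add: Der0_def fun_scale_def)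
qed

lemma inner_derivations_subspace: "End.subspace inner_derivations"
  unfolding inner_derivations_eq
proof (rule End.subspaceI)
  show "0 \<in> range ad" using ad_zero by (metis rangeI)
next
  fix x y assume "x \<in> range ad" "y \<in> range ad"
  then show "x + y \<in> range ad" by (auto simp flip: ad_add)
next
  fix c x assume "x \<in> range ad"
  then show "scE c x \<in> range ad" by (auto simp flip: ad_scale)
qed

lemma inner_derivations_subset_Der: "inner_derivations \<subseteq> Der"
  unfolding inner_derivations_eq using ad_in_Der by blast

text \<open>Rank-nullity needs a finite-dimensional ambient space: in coordinates with respect to
  \<open>Q\<close> every linear endomorphism is a combination of the elementary maps \<open>x \<mapsto> x\<^sub>q q'\<close>.\<close>

definition "coord x q = vs.representation Q x q"
definition "elementary_maps = (\<lambda>(q, q'). (\<lambda>x. sc (coord x q) q')) ` (Q \<times> Q)"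

lemma finite_elementary_maps: "finite elementary_maps"
  unfolding elementary_maps_def using finite_Q by simp

lemma sum_coord: "x = (\<Sum>q\<in>Q. sc (coord x q) q)"
  unfolding coord_def using vs.sum_representation_eq[OF Q_independent _ finite_Q] Q_span by auto

lemma Der_subset_span: "Der \<subseteq> End.span elementary_maps"
proof
  fix d assume d: "d \<in> Der"
  then interpret m: module_hom sc sc d by (simp add: derivations_def module_hom_iff_linear)
  have "d = (\<Sum>(q, q')\<in>Q \<times> Q. scE (coord (d q) q') (\<lambda>x. sc (coord x q) q'))"
  proof
    fix x
    have "d x = d (\<Sum>q\<in>Q. sc (coord x q) q)" using sum_coord[of x] by (rule arg_cong)
    also have "\<dots> = (\<Sum>q\<in>Q. sc (coord x q) (d q))" by (simp add: m.sum m.scale)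
    also have "\<dots> = (\<Sum>q\<in>Q. sc (coord x q) (\<Sum>q'\<in>Q. sc (coord (d q) q') q'))"
      by (rule sum.cong[OF refl]) (rule arg_cong[OF sum_coord])
    also have "\<dots> = (\<Sum>q\<in>Q. \<Sum>q'\<in>Q. sc (coord (d q) q') (sc (coord x q) q'))"
      by (simp add: vs.scale_sum_right mult.commute)
    also have "\<dots> = (\<Sum>(q, q')\<in>Q \<times> Q. sc (coord (d q) q') (sc (coord x q) q'))"
      by (rule sum.cartesian_product)
    also have "\<dots> = (\<Sum>(q, q')\<in>Q \<times> Q. scE (coord (d q) q') (\<lambda>x. sc (coord x q) q')) x"
      unfolding sum_fun_apply by (rule sum.cong[OF refl]) (auto simp: fun_scale_def)
    finally show "d x = (\<Sum>(q, q')\<in>Q \<times> Q. scE (coord (d q) q') (\<lambda>x. sc (coord x q) q')) x" .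
  qed
  also have "\<dots> \<in> End.span elementary_maps"
  proof (rule End.span_sum)
    fix z assume "z \<in> Q \<times> Q"
    then obtain q q' where z: "z = (q, q')" "q \<in> Q" "q' \<in> Q" by blast
    then have "(\<lambda>x. sc (coord x q) q') \<in> elementary_maps" by (auto simp: elementary_maps_def)
    then show "(case z of (q, q') \<Rightarrow> scE (coord (d q) q') (\<lambda>x. sc (coord x q) q')) \<in> End.span elementary_maps"
      using z by (simp add: End.span_scale End.span_base)
  qed
  finally show "d \<in> End.span elementary_maps" .
qed

definition inner_part :: "('a \<Rightarrow> 'a) \<Rightarrow> 'a" where "inner_part d = (\<Sum>v\<in>V. d (idem v) * idem v)"
definition normalize_der :: "('a \<Rightarrow> 'a) \<Rightarrow> ('a \<Rightarrow> 'a)" where "normalize_der d = d - ad (inner_part d)"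

lemma idem_der_idem_idem:
  assumes d: "d \<in> Der" and w: "w \<in> V"
  shows "idem w * d (idem w) * idem w = 0"
proof -
  have ee: "idem w * idem w = idem w" using idem_mult_idem[OF w w] by simp
  have ee_left: "idem w * (idem w * x) = idem w * x" for x by (simp add: mult.assoc[symmetric] ee)
  have "d (idem w) = d (idem w) * idem w + idem w * d (idem w)"
    using derivation_mult[OF d, of "idem w" "idem w"] ee by simp
  then have "idem w * d (idem w) * idem w
      = idem w * (d (idem w) * idem w + idem w * d (idem w)) * idem w"
    by simp
  also have "\<dots> = idem w * d (idem w) * idem w + idem w * d (idem w) * idem w"
    by (simp add: distrib_left distrib_right mult.assoc ee ee_left)
  finally show ?thesis by simp
qed

lemma idem_der_idem:
  assumes d: "d \<in> Der" and v: "v \<in> V" and w: "w \<in> V"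
  shows "idem w * d (idem v) * idem v = - (d (idem w) * idem v) + (if v = w then d (idem w) * idem w else 0)"
proof (cases "v = w")
  case True then show ?thesis using idem_der_idem_idem[OF d w] by simp
next
  case False
  have "0 = d (idem w * idem v)" using idem_mult_idem[OF w v] False derivation_zero[OF d] by simp
  also have "\<dots> = d (idem w) * idem v + idem w * d (idem v)" by (rule derivation_mult[OF d])
  finally have "idem w * d (idem v) = - (d (idem w) * idem v)"
    by (simp add: eq_neg_iff_add_eq_0 add.commute)
  then have "idem w * d (idem v) * idem v = - (d (idem w) * (idem v * idem v))" by (simp add: mult.assoc)
  then show ?thesis using False idem_mult_idem[OF v v] by simp
qed

lemma ad_inner_part_idem:
  assumes d: "d \<in> Der" and w: "w \<in> V"
  shows "ad (inner_part d) (idem w) = d (idem w)"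
proof -
  have "inner_part d * idem w = (\<Sum>v\<in>V. d (idem v) * (idem v * idem w))"
    by (simp add: inner_part_def sum_distrib_right mult.assoc)
  also have "\<dots> = (\<Sum>v\<in>V. if v = w then d (idem w) * idem w else 0)"
    by (rule sum.cong[OF refl]) (simp add: idem_mult_idem w)
  finally have right: "inner_part d * idem w = d (idem w) * idem w" using finite_V w by simp
  have "idem w * inner_part d = (\<Sum>v\<in>V. idem w * d (idem v) * idem v)"
    by (simp add: inner_part_def sum_distrib_left mult.assoc)
  also have "\<dots> = (\<Sum>v\<in>V. - (d (idem w) * idem v) + (if v = w then d (idem w) * idem w else 0))"
    by (rule sum.cong[OF refl]) (rule idem_der_idem[OF d _ w])
  also have "\<dots> = - (d (idem w) * vertex_sum) + d (idem w) * idem w"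
    using finite_V w by (simp add: sum.distrib sum_negf vertex_sum_def sum_distrib_left sum_subtractf)
  finally have "idem w * inner_part d = - d (idem w) + d (idem w) * idem w" by simp
  then show ?thesis unfolding ad_def using right by simp
qed

lemma linear_normalize_der: "Vector_Spaces.linear scE scE normalize_der"
  unfolding Vector_Spaces.linear_iff
proof (intro conjI allI End.vector_space_axioms)
  fix d d' :: "'a \<Rightarrow> 'a"
  have add: "inner_part (d + d') = inner_part d + inner_part d'"
    by (simp add: inner_part_def sum.distrib distrib_right)
  show "normalize_der (d + d') = normalize_der d + normalize_der d'"
    unfolding normalize_der_def add ad_add by (simp add: algebra_simps)
next
  fix c and d :: "'a \<Rightarrow> 'a"
  have scale: "inner_part (scE c d) = sc c (inner_part d)"
    by (simp add: inner_part_def fun_scale_def vs.scale_sum_right scale_mult_left)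
  show "normalize_der (scE c d) = scE c (normalize_der d)"
    unfolding normalize_der_def scale ad_scale by (simp add: fun_scale_def fun_eq_iff vs.scale_right_diff_distrib)
qed

lemma normalize_der_in_Der0: "d \<in> Der \<Longrightarrow> normalize_der d \<in> Der0"
  unfolding Der0_def normalize_der_def
  using End.subspace_diff[OF Der_subspace _ ad_in_Der] ad_inner_part_idem by simp

lemma normalize_der_id: "d \<in> Der0 \<Longrightarrow> normalize_der d = d"
  by (simp add: normalize_der_def inner_part_def Der0_def ad_zero)

lemma normalize_der_image_Der: "normalize_der ` Der = Der0"
proof
  show "normalize_der ` Der \<subseteq> Der0" using normalize_der_in_Der0 by blast
  show "Der0 \<subseteq> normalize_der ` Der"
  proof
    fix d assume "d \<in> Der0"
    then have "d \<in> Der" "normalize_der d = d" by (auto simp: Der0_def normalize_der_id)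
    then show "d \<in> normalize_der ` Der" by (metis imageI)
  qed
qed

lemma normalize_der_image_inner: "normalize_der ` inner_derivations = inner_derivations \<inter> Der0"
proof
  show "normalize_der ` inner_derivations \<subseteq> inner_derivations \<inter> Der0"
  proof
    fix x assume "x \<in> normalize_der ` inner_derivations"
    then obtain a where x: "x = normalize_der (ad a)" by (auto simp: inner_derivations_eq)
    then have "x = ad (a - inner_part (ad a))" by (simp add: normalize_der_def ad_diff)
    then have "x \<in> inner_derivations" by (simp add: inner_derivations_eq)
    moreover have "x \<in> Der0" using x normalize_der_in_Der0[OF ad_in_Der] by simp
    ultimately show "x \<in> inner_derivations \<inter> Der0" by blast
  qed
  show "inner_derivations \<inter> Der0 \<subseteq> normalize_der ` inner_derivations"
  proof
    fix d assume "d \<in> inner_derivations \<inter> Der0"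
    then have "d \<in> inner_derivations" "normalize_der d = d" by (auto simp: normalize_der_id)
    then show "d \<in> normalize_der ` inner_derivations" by (metis imageI)
  qed
qed

lemma normalize_der_kernel:
  "{d \<in> Der. normalize_der d = 0} = {d \<in> inner_derivations. normalize_der d = 0}"
proof -
  have "d \<in> inner_derivations" if "normalize_der d = 0" for d
  proof -
    have "d = ad (inner_part d)" using that unfolding normalize_der_def by (simp add: fun_eq_iff)
    then show ?thesis unfolding inner_derivations_eq by blast
  qed
  then show ?thesis using inner_derivations_subset_Der by auto
qed

definition vertex_commutant :: "'a set" where
  "vertex_commutant = {a. \<forall>v\<in>V. a * idem v = idem v * a}"

lemma vertex_commutant_subspace: "vs.subspace vertex_commutant"
  by (intro vs.subspaceI)
     (auto simp: vertex_commutant_def distrib_left distrib_right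
        scale_mult_left[symmetric] scale_mult_right[symmetric])

lemma ad_image_vertex_commutant: "ad ` vertex_commutant = inner_derivations \<inter> Der0"
proof
  show "ad ` vertex_commutant \<subseteq> inner_derivations \<inter> Der0"
    using ad_in_Der by (auto simp: vertex_commutant_def Der0_def inner_derivations_eq ad_def)
  show "inner_derivations \<inter> Der0 \<subseteq> ad ` vertex_commutant"
  proof
    fix d assume "d \<in> inner_derivations \<inter> Der0"
    then obtain a where d: "d = ad a" "\<forall>v\<in>V. ad a (idem v) = 0"
      unfolding inner_derivations_eq Der0_def by blast
    then have "a \<in> vertex_commutant" by (auto simp: vertex_commutant_def ad_def)
    then show "d \<in> ad ` vertex_commutant" using d by blast
  qed
qed

lemma ad_kernel_vertex_commutant: "{a \<in> vertex_commutant. ad a = 0} = centre"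
  by (auto simp: centre_def ad_def fun_eq_iff vertex_commutant_def)

lemma Q_C_eq: "Q_C V E t h \<pi> Q = {q \<in> Q. src q = tgt q}"
  by (simp add: Q_C_def src_def tgt_def)

lemma vertex_commutant_decomp:
  assumes a: "a \<in> vertex_commutant"
  shows "a = (\<Sum>v\<in>V. idem v * a * idem v)"
proof -
  have "a = vertex_sum * a * vertex_sum" by simp
  also have "\<dots> = (\<Sum>v\<in>V. idem v * a * vertex_sum)"
    by (simp only: vertex_sum_def sum_distrib_right)
  also have "\<dots> = (\<Sum>v\<in>V. \<Sum>w\<in>V. idem v * a * idem w)"
    by (simp only: vertex_sum_def sum_distrib_left)
  also have "\<dots> = (\<Sum>v\<in>V. \<Sum>w\<in>V. if w = v then idem v * a * idem v else 0)"
  proof (intro sum.cong refl)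
    fix v w assume v: "v \<in> V" and w: "w \<in> V"
    have "idem v * a * idem w = idem v * idem w * a" using a w by (simp add: vertex_commutant_def mult.assoc)
    then show "idem v * a * idem w = (if w = v then idem v * a * idem v else 0)"
      using idem_mult_idem[OF v w] by auto
  qed
  also have "\<dots> = (\<Sum>v\<in>V. idem v * a * idem v)" using finite_V by simp
  finally show ?thesis .
qed

lemma vertex_commutant_subset_span: "vertex_commutant \<subseteq> vs.span {q \<in> Q. src q = tgt q}"
proof
  fix a assume a: "a \<in> vertex_commutant"
  have "idem v * a * idem v \<in> vs.span {q \<in> Q. src q = tgt q}" if "v \<in> V" for v
  proof -
    have "vs.span {q\<in>Q. src q = v \<and> tgt q = v} \<subseteq> vs.span {q \<in> Q. src q = tgt q}"
      by (rule vs.span_mono) auto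
    then show ?thesis using idem_sandwich_span[OF that that] by blast
  qed
  then show "a \<in> vs.span {q \<in> Q. src q = tgt q}"
    by (subst vertex_commutant_decomp[OF a]) (rule vs.span_sum)
qed

lemma dim_vertex_commutant: "vs.dim vertex_commutant = card (Q_C V E t h \<pi> Q)"
  unfolding Q_C_eq
  by (rule vs.basis_card_eq_dim[symmetric])
     (use vertex_commutant_subset_span vs.independent_mono[OF Q_independent]
       in \<open>auto simp: vertex_commutant_def idem_mult_Q Q_mult_idem\<close>)

end

section \<open>The dimension count\<close>

context quiver_quotient
begin

lemma dim_Der:
  "End.dim Der = End.dim Der0 + End.dim {d \<in> Der. normalize_der d = 0}"
  using rank_nullity_on_subspace[OF linear_normalize_der Der_subspace finite_elementary_maps
      Der_subset_span]
  by (simp add: normalize_der_image_Der)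

lemma dim_inner_derivations:
  "End.dim inner_derivations
     = End.dim (inner_derivations \<inter> Der0) + End.dim {d \<in> Der. normalize_der d = 0}"
  using rank_nullity_on_subspace[OF linear_normalize_der inner_derivations_subspace
      finite_elementary_maps order_trans[OF inner_derivations_subset_Der Der_subset_span]]
  by (simp add: normalize_der_image_inner normalize_der_kernel)

lemma dim_Der0: "End.dim Der0 = Op.dim F2"
proof -
  have "{d \<in> Der0. der_lift d = 0} = {0}"
    using der_lift_eq_0 End.subspace_0[OF Der0_subspace] by (auto simp: der_lift_def)
  moreover have "End.dim {0} = 0"
    using End.dim_span_eq_card_independent[OF End.independent_empty] by simp
  moreover have "Der0 \<subseteq> End.span elementary_maps"
    using Der_subset_span by (auto simp: Der0_def)
  ultimately show ?thesis
    using rank_nullity_on_subspace[OF linear_der_lift Der0_subspace finite_elementary_maps]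
    by (simp add: der_lift_image)
qed

lemma dim_vertex_commutant_eq:
  "vs.dim vertex_commutant = End.dim (inner_derivations \<inter> Der0) + vs.dim (centre :: 'a set)"
  using rank_nullity_on_subspace[OF linear_ad vertex_commutant_subspace finite_Q]
  by (simp add: Q_span ad_image_vertex_commutant ad_kernel_vertex_commutant)

end

theorem proposition4p3:
  fixes V :: "'v set" and E :: "'e set" and t h :: "'e \<Rightarrow> 'v"
    and I :: "(('v,'e) qpath \<Rightarrow> 'k::field) set"
    and sc :: "'k \<Rightarrow> 'a::ring \<Rightarrow> 'a" and \<pi> :: "(('v,'e) qpath \<Rightarrow> 'k) \<Rightarrow> 'a"
    and Q :: "'a set"
  assumes "finite_quiver V E t h"
    and "connected_quiver V E t h"
    and "is_ideal V E t h I"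
    and "I \<subseteq> arrow_ideal_sq V E t h"
    and "quotient_map V E t h I sc \<pi>"
    and "\<exists>B. finite B \<and> module.span sc B = UNIV"
    and "path_basis V E t h sc \<pi> Q"
  shows "dim_HH1 sc =
           int (vector_space.dim (fun_scale sc) (frakF2 V E t h sc \<pi> Q I))
         + int (vector_space.dim sc (centre :: 'a set))
         - int (card (Q_C V E t h \<pi> Q))"
proof -
  interpret quiver_quotient V E t h I sc \<pi> Q
    using assms(1,5-7) by unfold_locales
  show ?thesis
    unfolding dim_HH1_def
    using dim_Der dim_inner_derivations dim_Der0 dim_vertex_commutant_eq dim_vertex_commutant
    by simp
qed

end
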